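(* Let $n \ge 3$, $k \in [1, n-2]$, $\beta > 1$, and let $\alpha = (3, 1, \ldots, 1, \beta, 1, \ldots, 1)$ be the composition of length $n-1$ with first entry $3$, entry $\beta$ in position $k+1$, and all other entries $1$. Then for every prime $p$: (1) if $\beta = 2$, \begin{align*} g_\alpha(p) &= (n-1)p^{2n-k-5} + (n-k-1)(n-2) p^{n-3} (p-1)- (n-k-1)p^{n-3} \\ &\quad+\left((n-k-2) + \binom{n-k-2}{2}\right)p^{n-3}(p-2)(p-3); \end{align*} (2) if $\beta > 2$, \begin{align*} g_\alpha(p) &= (n-k-1)(n-2) p^{2n-k-5} + \big((n-k-1)(k-1) + 1 + (n-k-2)(n-k-3)\big) p^{n-3} (p-1) \\ &\quad+(n-k-2)p^{n-3}(p-1)^2 + (n-k-2)p^{n-2} (p-1) + (n-k-2)(n-k-3)p^{n-3}(p-1)(p-2). \end{align*}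
   Context: For a composition $\alpha=(e_1,\ldots,e_{n-1})$ (positive integers), $g_\alpha(p)$ is the number of $n\times n$ irreducible subring matrices with diagonal $(p^{e_1},\ldots,p^{e_{n-1}},1)$: upper triangular integer matrices $A$ with $A_{rr}=p^{e_r}$ ($r<n$), $A_{nn}=1$, last column $(1,\ldots,1)^T$, entries $A_{rs}=p\,a_{rs}$ for $1\le r<s\le n-1$ with integers $0\le p\,a_{rs}<p^{e_r}$, such that for all columns $v_i,v_j$ of $A$ the componentwise product $v_i\circ v_j$ lies in the $\mathbb{Z}$-column span of $A$. Binomial coefficients $\binom{m}{2}$ with $m<2$ are $0$. *)

theory Defs
  imports Main "HOL-Computational_Algebra.Primes"
begin

text \<open>Matrices are functions nat => nat => int with 0-based indices 0..n-1
  (row r, column s); entries outside the n x n range are required to be 0.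
  A composition (e_1,...,e_(n-1)) is a list e of length n-1, so n = length e + 1.\<close>

definition col :: "(nat \<Rightarrow> nat \<Rightarrow> int) \<Rightarrow> nat \<Rightarrow> nat \<Rightarrow> int" where
  "col A j = (\<lambda>r. A r j)"

definition in_col_span :: "nat \<Rightarrow> (nat \<Rightarrow> nat \<Rightarrow> int) \<Rightarrow> (nat \<Rightarrow> int) \<Rightarrow> bool" where
  "in_col_span n A v \<longleftrightarrow> (\<exists>c :: nat \<Rightarrow> int. \<forall>r<n. v r = (\<Sum>j<n. c j * A r j))"

definition irr_subring_matrices :: "nat list \<Rightarrow> nat \<Rightarrow> (nat \<Rightarrow> nat \<Rightarrow> int) set" where
  "irr_subring_matrices e p =
    (let n = length e + 1 in
     {A. (\<forall>i j. (n \<le> i \<or> n \<le> j) \<longrightarrow> A i j = 0)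
       \<and> (\<forall>i j. j < i \<longrightarrow> A i j = 0)
       \<and> (\<forall>r < n - 1. A r r = int p ^ (e ! r))
       \<and> A (n - 1) (n - 1) = 1
       \<and> (\<forall>r < n. A r (n - 1) = 1)
       \<and> (\<forall>r s. r < s \<and> s < n - 1 \<longrightarrow>
              (\<exists>a :: int. A r s = int p * a) \<and> 0 \<le> A r s \<and> A r s < int p ^ (e ! r))
       \<and> (\<forall>i<n. \<forall>j<n. in_col_span n A (\<lambda>r. col A i r * col A j r))})"

definition g :: "nat list \<Rightarrow> nat \<Rightarrow> nat" where
  "g e p = card (irr_subring_matrices e p)"

end

theory Submission
  imports Defs "HOL-Library.FuncSet"
begin

(*
  Only rows 0 and k carry free parameters: every other row has diagonal entry p, and an entry
  p a with 0 <= p a < p vanishes.  Writing row 0 as (p^3, p a_1, ..., p a_(n-2), 1) and row k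
  as (0, ..., p^beta, p b_(k+1), ..., p b_(n-2), 1), closure under products of columns becomes:
  p | a_k, and for all i, j in R = {1, ..., n-2} - {k}, with q = p^(beta-2), kappa = a_k / p
  and D(f)_ij = f_i f_j - [i = j] f_i (idem_defect below),
      q | D(b)_ij   and   p | D(a)_ij - kappa D(b)_ij / q.
  Only the residues of the a_i mod p enter, so their high p-adic digits contribute p^(n-3).
  For beta = 2 this leaves D(alpha) = kappa D(b) (mod p) on residue vectors; for beta > 2 the
  condition q | D(b) forces b = e + q t with e zero or a unit vector, and the congruence becomes
  linear in t.  Both systems are solved over F_p according to the support of b (resp. of e and
  alpha).  For beta = 2, a support of three or more coordinates forces alpha = b and kappa = 1,
  and a support of two coordinates allows in addition only the shape (v, p + 1 - v).
*)

section \<open>Vectors supported on an index set\<close>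

definition vecs_on :: "nat set \<Rightarrow> int set \<Rightarrow> (nat \<Rightarrow> int) set" where
  "vecs_on I D = {f. (\<forall>i\<in>I. f i \<in> D) \<and> (\<forall>i. i \<notin> I \<longrightarrow> f i = 0)}"

lemma bij_betw_restrict_vecs_on: "bij_betw (\<lambda>f. restrict f I) (vecs_on I D) (PiE I (\<lambda>_. D))"
proof (rule bij_betw_byWitness[where f' = "\<lambda>g x. if x \<in> I then g x else 0"])
  show "\<forall>f\<in>vecs_on I D. (\<lambda>x. if x \<in> I then restrict f I x else 0) = f"
    by (auto simp: vecs_on_def fun_eq_iff)
  show "\<forall>g\<in>PiE I (\<lambda>_. D). restrict (\<lambda>x. if x \<in> I then g x else 0) I = g"
    by (auto simp: fun_eq_iff PiE_def extensional_def)
qed (auto simp: vecs_on_def)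

lemma card_vecs_on: "finite I \<Longrightarrow> card (vecs_on I D) = card D ^ card I"
  using bij_betw_same_card[OF bij_betw_restrict_vecs_on] by (simp add: card_PiE)

lemma finite_vecs_on: "finite I \<Longrightarrow> finite D \<Longrightarrow> finite (vecs_on I D)"
  using bij_betw_finite[OF bij_betw_restrict_vecs_on] by (simp add: finite_PiE)

definition idem_defect :: "(nat \<Rightarrow> int) \<Rightarrow> nat \<Rightarrow> nat \<Rightarrow> int" where
  "idem_defect f i j = f i * f j - (if i = j then f i else 0)"

lemma idem_defect_diag[simp]: "idem_defect f i i = f i * f i - f i"
  by (simp add: idem_defect_def)

lemma idem_defect_off_diag[simp]: "i \<noteq> j \<Longrightarrow> idem_defect f i j = f i * f j"
  by (simp add: idem_defect_def)

definition single_vec :: "int \<Rightarrow> nat \<Rightarrow> nat \<Rightarrow> int" where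
  "single_vec v l = (\<lambda>s. if s = l then v else 0)"

abbreviation basis_vec :: "nat \<Rightarrow> nat \<Rightarrow> int" where
  "basis_vec l \<equiv> single_vec 1 l"

definition pair_vec :: "int \<Rightarrow> nat \<Rightarrow> int \<Rightarrow> nat \<Rightarrow> nat \<Rightarrow> int" where
  "pair_vec a l b j = (\<lambda>s. if s = l then a else if s = j then b else 0)"

definition zero_or_basis :: "nat set \<Rightarrow> (nat \<Rightarrow> int) set" where
  "zero_or_basis I = insert (\<lambda>_. 0) (basis_vec ` I)"

lemma basis_vec_eq_iff: "basis_vec i = basis_vec j \<longleftrightarrow> i = j"
  by (auto simp: single_vec_def fun_eq_iff split: if_splits)

lemma single_vec_nonzero: "v \<noteq> 0 \<Longrightarrow> single_vec v i \<noteq> (\<lambda>_. 0)"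
  by (auto simp: single_vec_def fun_eq_iff)

lemma basis_vec_nonzero: "basis_vec i \<noteq> (\<lambda>_. 0)"
  by (simp add: single_vec_nonzero)

lemma card_zero_or_basis:
  assumes "finite I"
  shows "card (zero_or_basis I) = card I + 1"
proof -
  have "card (basis_vec ` I) = card I" by (intro card_image inj_onI) (simp add: basis_vec_eq_iff)
  moreover have "(\<lambda>_. 0) \<notin> basis_vec ` I" using basis_vec_nonzero by (metis imageE)
  ultimately show ?thesis using assms by (simp add: zero_or_basis_def)
qed

lemma finite_zero_or_basis: "finite I \<Longrightarrow> finite (zero_or_basis I)"
  by (simp add: zero_or_basis_def)

lemma zero_or_basis_mono: "I \<subseteq> J \<Longrightarrow> e \<in> zero_or_basis I \<Longrightarrow> e \<in> zero_or_basis J"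
  by (auto simp: zero_or_basis_def)

lemma zero_or_basis_props:
  assumes "e \<in> zero_or_basis I"
  shows "e i * e i = e i" "i \<noteq> j \<Longrightarrow> e i * e j = 0" "e i = 0 \<or> e i = 1" "i \<notin> I \<Longrightarrow> e i = 0"
  using assms by (auto simp: zero_or_basis_def single_vec_def)

lemma idem_defect_zero_or_basis: "e \<in> zero_or_basis I \<Longrightarrow> idem_defect e i j = 0"
  by (auto simp: idem_defect_def zero_or_basis_props)

lemma zdiv_less_if_less_mult:
  fixes x d c :: int
  assumes "0 < d" "x < c * d"
  shows "x div d < c"
proof -
  have "x div d * d \<le> x"
    using assms(1) by (metis minus_mod_eq_mult_div le_diff_eq mult.commute pos_mod_sign
        add_increasing2 order_refl diff_add_cancel)
  hence "x div d * d < c * d" using assms(2) by linarith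
  thus ?thesis using assms(1) by (simp add: mult_less_cancel_right)
qed

lemma prime_power_dvd_idem:
  fixes p x :: int
  assumes p: "prime p" and dvd: "p ^ m dvd x * (x - 1)"
  shows "p ^ m dvd x \<or> p ^ m dvd x - 1"
proof (cases "m = 0")
  case False
  note multD = prime_power_dvd_multD[OF prime_imp_prime_elem[OF p], of m]
  show ?thesis
  proof (cases "p dvd x")
    case True
    have "\<not> p dvd x - 1"
    proof
      assume "p dvd x - 1"
      hence "p dvd x - (x - 1)" using True by (rule dvd_diff[rotated])
      thus False using prime_gt_1_int[OF p] zdvd_imp_le[of p 1] by simp
    qed
    thus ?thesis using multD[of "x - 1" x] dvd False by (simp add: mult.commute)
  next
    case False
    thus ?thesis using multD[of x "x - 1"] dvd \<open>m \<noteq> 0\<close> by simp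
  qed
qed simp

lemma idem_defect_mod_cong:
  assumes "a i mod m = c i mod m" "a j mod m = c j mod m"
  shows "idem_defect a i j mod m = idem_defect c i j mod m"
proof -
  have "(a i * a j) mod m = (c i * c j) mod m" using assms by (metis mod_mult_cong)
  thus ?thesis unfolding idem_defect_def using assms by (auto intro: mod_diff_cong)
qed

definition idem_defect_lin :: "(nat \<Rightarrow> int) \<Rightarrow> (nat \<Rightarrow> int) \<Rightarrow> nat \<Rightarrow> nat \<Rightarrow> int" where
  "idem_defect_lin e t i j = (if i = j then (2 * e i - 1) * t i else e i * t j + e j * t i)"

lemma idem_defect_lift:
  assumes "e \<in> zero_or_basis I"
  shows "idem_defect (\<lambda>s. e s + q * t s) i j = q * (idem_defect_lin e t i j + q * (t i * t j))"
proof (cases "i = j")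
  case True
  have "idem_defect (\<lambda>s. e s + q * t s) i j
      = (e i * e i - e i) + q * ((2 * e i - 1) * t i + q * (t i * t i))"
    using True by (simp add: idem_defect_def algebra_simps)
  thus ?thesis using True zero_or_basis_props(1)[OF assms] by (simp add: idem_defect_lin_def)
next
  case False
  have "idem_defect (\<lambda>s. e s + q * t s) i j = e i * e j + q
      * (e i * t j + e j * t i + q * (t i * t j))"
    using False by (simp add: idem_defect_def algebra_simps)
  thus ?thesis using False zero_or_basis_props(2)[OF assms False] by (simp add: idem_defect_lin_def)
qed

lemma zero_or_basis_if_idem_mod_prime_power:
  fixes p :: int
  assumes p: "prime p" and m: "m > 0" and f: "f \<in> vecs_on I {0..<p ^ m}"
    and idem: "\<forall>i\<in>I. \<forall>j\<in>I. p ^ m dvd idem_defect f i j"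
  shows "f \<in> zero_or_basis I"
proof -
  have Q: "p ^ m > 1" using prime_gt_1_int[OF p] m by simp
  have f01: "f s = 0 \<or> f s = 1" for s
  proof (cases "s \<in> I")
    case True
    hence "p ^ m dvd f s * (f s - 1)" using idem
      by (metis idem_defect_diag right_diff_distrib' mult.right_neutral)
    hence "p ^ m dvd f s \<or> p ^ m dvd f s - 1" by (rule prime_power_dvd_idem[OF p])
    hence "f s mod p ^ m = 0 \<or> f s mod p ^ m = 1 mod p ^ m"
      by (auto simp: dvd_eq_mod_eq_0 mod_eq_dvd_iff)
    moreover have "f s mod p ^ m = f s" using f True by (auto simp: vecs_on_def)
    ultimately show ?thesis using Q by auto
  qed (use f in \<open>auto simp: vecs_on_def\<close>)
  have fI: "s \<in> I" if "f s \<noteq> 0" for s using f that by (auto simp: vecs_on_def)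
  show ?thesis
  proof (cases "f = (\<lambda>_. 0)")
    case False
    then obtain l where l: "f l \<noteq> 0" by auto
    have "f s = 0" if "s \<noteq> l" for s
    proof (rule ccontr)
      assume fs: "f s \<noteq> 0"
      hence "f s = 1" "f l = 1" using f01 l by auto
      moreover have "p ^ m dvd idem_defect f s l" using idem fI l fs by blast
      ultimately have "p ^ m dvd 1" using that by simp
      thus False using Q by simp
    qed
    hence "f = basis_vec l" using l f01[of l] by (auto simp: single_vec_def fun_eq_iff)
    thus ?thesis using fI[OF l] by (simp add: zero_or_basis_def)
  qed (simp add: zero_or_basis_def)
qed

section \<open>Residues modulo a prime\<close>

lemma card_pairs_unique_snd:
  assumes "finite X" "\<And>x. x \<in> X \<Longrightarrow> card {t. Q x t} = 1"
  shows "card {(x, t). x \<in> X \<and> Q x t} = card X"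
proof -
  have "{(x, t). x \<in> X \<and> Q x t} = Sigma X (\<lambda>x. {t. Q x t})" by auto
  moreover have "finite {t. Q x t}" if "x \<in> X" for x
    using assms(2)[OF that] by (intro card_ge_0_finite) simp
  ultimately show ?thesis using assms by (simp add: card_SigmaI)
qed

locale prime_residues =
  fixes p :: nat
  assumes pp: "prime p"
begin

abbreviation "P \<equiv> int p"
abbreviation "Pr \<equiv> {0..<int p}"

lemma P_gt_1: "P > 1" using pp prime_gt_1_nat by auto

lemma p_pos: "0 < p" using pp prime_gt_0_nat by blast

lemma p_ge_2: "p \<ge> 2" using pp prime_ge_2_nat by blast

lemma int_p_minus_2_times_p_minus_3: "int (p - 2) * int (p - 3) = (P - 2) * (P - 3)"
proof (cases "p = 2")
  case True thus ?thesis by simp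
next
  case False hence "p \<ge> 3" using p_ge_2 by simp
  thus ?thesis by (simp add: of_nat_diff)
qed

lemma prime_P: "prime P" using pp by simp

lemma residue_eq_if_dvd: "x \<in> Pr \<Longrightarrow> y \<in> Pr \<Longrightarrow> P dvd x - y \<Longrightarrow> x = y"
  by (metis atLeastLessThan_iff mod_eq_dvd_iff mod_pos_pos_trivial)

lemma residue_zero_if_dvd: "x \<in> Pr \<Longrightarrow> P dvd x \<Longrightarrow> x = 0"
  using residue_eq_if_dvd[of x 0] P_gt_1 by simp

lemma not_dvd_nonzero_residue: "x \<in> Pr \<Longrightarrow> x \<noteq> 0 \<Longrightarrow> \<not> P dvd x"
  using residue_zero_if_dvd by blast

lemma P_dvd_mult_iff: "P dvd x * y \<longleftrightarrow> P dvd x \<or> P dvd y"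
  using prime_P by (rule prime_dvd_mult_iff)

lemma card_residue_sols:
  assumes "\<not> P dvd c"
  shows "card {t \<in> Pr. P dvd c * t - y} = 1"
proof -
  have "coprime c P" using prime_imp_coprime[OF prime_P assms] by (simp add: coprime_commute)
  then obtain u v where uv: "u * c + v * P = 1"
    using bezout_int[of c P] by (auto simp: coprime_iff_gcd_eq_1)
  define t0 where "t0 = (u * y) mod P"
  have t0P: "t0 \<in> Pr" using P_gt_1 by (simp add: t0_def)
  have t0_sol: "P dvd c * t0 - y"
  proof -
    have d1: "P dvd t0 - u * y" unfolding t0_def by (subst mod_eq_dvd_iff[symmetric]) simp
    have "c * t0 - y = c * t0 - y * (u * c + v * P)" using uv by simp
    also have "\<dots> = c * (t0 - u * y) - (v * y) * P" by (simp add: algebra_simps)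
    finally show ?thesis using d1 by (simp add: dvd_diff)
  qed
  have "t = t0" if "t \<in> Pr" "P dvd c * t - y" for t
  proof -
    have "P dvd c * (t - t0)" using dvd_diff[OF that(2) t0_sol] by (simp add: algebra_simps)
    hence "P dvd t - t0" using assms P_dvd_mult_iff by blast
    thus ?thesis using residue_eq_if_dvd that t0P by blast
  qed
  hence "{t \<in> Pr. P dvd c * t - y} = {t0}" using t0P t0_sol by blast
  thus ?thesis by simp
qed

lemma card_nonzero_residue_sols:
  assumes "\<not> P dvd c" "\<not> P dvd y"
  shows "card {t \<in> {1..<P}. P dvd c * t - y} = 1"
proof -
  have "t \<noteq> 0" if "P dvd c * t - y" for t
    using that assms(2) by auto
  hence "{t \<in> {1..<P}. P dvd c * t - y} = {t \<in> Pr. P dvd c * t - y}"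
    by force
  thus ?thesis using card_residue_sols[OF assms(1)] by simp
qed

lemma residue_zero_if_dvd_mult: "x \<in> Pr \<Longrightarrow> y \<in> Pr \<Longrightarrow> y \<noteq> 0 \<Longrightarrow> P dvd x * y \<Longrightarrow> x = 0"
  using P_dvd_mult_iff not_dvd_nonzero_residue residue_zero_if_dvd by blast

lemma residue_one_if_dvd: "x \<in> Pr \<Longrightarrow> P dvd x - 1 \<Longrightarrow> x = 1"
  using residue_eq_if_dvd[of x 1] P_gt_1 by simp

lemma not_dvd_idem_defect: "c \<in> {2..<P} \<Longrightarrow> \<not> P dvd c * c - c"
proof -
  assume c: "c \<in> {2..<P}"
  have "c * c - c = c * (c - 1)" by (simp add: algebra_simps)
  moreover have "\<not> P dvd c" "\<not> P dvd c - 1"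
    using c not_dvd_nonzero_residue[of c] not_dvd_nonzero_residue[of "c - 1"] by auto
  ultimately show ?thesis using P_dvd_mult_iff by metis
qed

lemma dvd_between_0_2P: "P dvd z \<Longrightarrow> 0 < z \<Longrightarrow> z < 2 * P \<Longrightarrow> z = P"
proof -
  assume "P dvd z" "0 < z" "z < 2 * P"
  then obtain c where c: "z = P * c" by blast
  have "0 < c" using c \<open>0 < z\<close> P_gt_1 by (simp add: zero_less_mult_iff)
  moreover have "c < 2" using c \<open>z < 2 * P\<close> P_gt_1 by (simp add: mult.commute)
  ultimately show ?thesis using c by simp
qed

lemma two_coords_congs:
  assumes xy: "\<not> P dvd x" "\<not> P dvd y"
    and E1: "P dvd (x * x - x) - \<kappa> * (u * u - u)"
    and E2: "P dvd (y * y - y) - \<kappa> * (w * w - w)"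
    and E3: "P dvd x * y - \<kappa> * (u * w)"
  shows "P dvd x + y - u - w" "P dvd (x - u) * (u + w - 1)"
proof -
  define F1 where "F1 = w * x - w - u * y + y"
  define F2 where "F2 = u * y - u - w * x + x"
  have "x * F1 = w * ((x * x - x) - \<kappa> * (u * u - u)) - (u - 1) * (x * y - \<kappa> * (u * w))"
    unfolding F1_def by (simp add: algebra_simps)
  hence "P dvd x * F1" using E1 E3 by (metis dvd_diff dvd_mult)
  hence F1: "P dvd F1" using xy P_dvd_mult_iff by blast
  have "y * F2 = u * ((y * y - y) - \<kappa> * (w * w - w)) - (w - 1) * (x * y - \<kappa> * (u * w))"
    unfolding F2_def by (simp add: algebra_simps)
  hence "P dvd y * F2" using E2 E3 by (metis dvd_diff dvd_mult)
  hence F2: "P dvd F2" using xy P_dvd_mult_iff by blast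
  show sum: "P dvd x + y - u - w"
    using dvd_add[OF F1 F2] unfolding F1_def F2_def by (simp add: algebra_simps)
  have "(x - u) * (u + w - 1) = F1 - (1 - u) * (x + y - u - w)"
    unfolding F1_def by (simp add: algebra_simps)
  thus "P dvd (x - u) * (u + w - 1)" using F1 sum by (simp add: dvd_diff)
qed

lemma two_coords_cases:
  assumes res: "x \<in> Pr" "y \<in> Pr" "u \<in> Pr" "w \<in> Pr" and k: "\<kappa> \<in> {1..<P}" and nz: "u \<noteq> 0" "w \<noteq> 0"
    and E1: "P dvd (x * x - x) - \<kappa> * (u * u - u)"
    and E2: "P dvd (y * y - y) - \<kappa> * (w * w - w)"
    and E3: "P dvd x * y - \<kappa> * (u * w)"
  shows "(x = u \<and> y = w \<and> \<kappa> = 1) \<or> (x \<noteq> u \<and> u + w = P + 1 \<and> x + y = P + 1)"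
proof -
  have "\<not> P dvd \<kappa>" "\<not> P dvd u" "\<not> P dvd w"
    using k nz res not_dvd_nonzero_residue by auto
  hence kuw: "\<not> P dvd \<kappa> * (u * w)" by (simp add: P_dvd_mult_iff)
  have xy: "\<not> P dvd x" "\<not> P dvd y"
    using E3 kuw by (metis dvd_diff_right_iff dvd_minus_iff dvd_mult minus_diff_eq mult.commute)+
  note congs = two_coords_congs[OF xy E1 E2 E3]
  have x0: "x \<noteq> 0" "y \<noteq> 0" using xy by auto
  show ?thesis
  proof (cases "x = u")
    case True
    hence "P dvd y - w" using congs(1) by simp
    hence yw: "y = w" using residue_eq_if_dvd res by blast
    have "P dvd (u * w) * (1 - \<kappa>)" using E3 True yw by (simp add: algebra_simps)
    hence "P dvd \<kappa> - 1"
      using nz res not_dvd_nonzero_residue P_dvd_mult_iff by (metis dvd_minus_iff minus_diff_eq)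
    thus ?thesis using True yw residue_one_if_dvd k by auto
  next
    case False
    hence "\<not> P dvd x - u" using residue_eq_if_dvd res by blast
    hence "P dvd u + w - 1" using congs(2) P_dvd_mult_iff by blast
    hence uw: "u + w - 1 = P" using dvd_between_0_2P res nz by auto
    have e: "x + y - 1 = (x + y - u - w) + P" using uw by linarith
    have "P dvd x + y - 1" unfolding e by (rule dvd_add[OF congs(1) dvd_refl])
    hence "x + y - 1 = P" using dvd_between_0_2P res x0 by auto
    thus ?thesis using uw False by simp
  qed
qed

lemma card_linear_cong_family:
  assumes "finite X" "\<And>x. x \<in> X \<Longrightarrow> \<not> P dvd c x"
  shows "card {(x, t). x \<in> X \<and> t \<in> Pr \<and> P dvd c x * t - y x} = card X"
  using assms card_residue_sols by (intro card_pairs_unique_snd) simp_all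

lemma card_linear_cong_family_nonzero:
  assumes "finite X" "\<And>x. x \<in> X \<Longrightarrow> \<not> P dvd c x" "\<And>x. x \<in> X \<Longrightarrow> \<not> P dvd y x"
  shows "card {(x, t). x \<in> X \<and> t \<in> {1..<P} \<and> P dvd c x * t - y x} = card X"
  using assms card_nonzero_residue_sols by (intro card_pairs_unique_snd) simp_all

lemma vecs_on_Pr_range: "f \<in> vecs_on I Pr \<Longrightarrow> f s \<in> Pr"
  using P_gt_1 by (cases "s \<in> I") (auto simp: vecs_on_def)

lemma zero_or_basis_if_idem_mod:
  "\<alpha> \<in> vecs_on I Pr \<Longrightarrow> \<forall>i\<in>I. \<forall>j\<in>I. P dvd idem_defect \<alpha> i j \<Longrightarrow> \<alpha> \<in> zero_or_basis I"
  using zero_or_basis_if_idem_mod_prime_power[OF prime_P, of 1] by simp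

lemma zero_or_basis_in_vecs_on: "\<alpha> \<in> zero_or_basis I \<Longrightarrow> \<alpha> \<in> vecs_on I Pr"
  using P_gt_1 by (auto simp: zero_or_basis_def vecs_on_def single_vec_def)

end

section \<open>Parametrising the subring matrices\<close>

lemma in_col_span_multiple:
  assumes "m < n" "\<forall>r<n. w r = t * A r m"
  shows "in_col_span n A w"
proof -
  have e: "(\<Sum>j<n. (if j = m then t else 0) * A r j) = t * A r m" for r
  proof -
    have "(\<Sum>j<n. (if j = m then t else 0) * A r j) = (\<Sum>j<n. if j = m then t * A r j else 0)"
      by (rule sum.cong) auto
    also have "\<dots> = t * A r m" using assms(1) by simp
    finally show ?thesis .
  qed
  have "\<forall>r<n. w r = (\<Sum>j<n. (if j = m then t else 0) * A r j)"
    using assms(2) e by simp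
  thus ?thesis unfolding in_col_span_def by (intro exI[of _ "\<lambda>j. if j = m then t else 0"])
qed

(* Indices are 0-based, as in Defs: the paper's rows 1 and k + 1 are the rows 0 and k here. *)
locale three_beta_comp = prime_residues +
  fixes n k \<beta> :: nat
  assumes n3: "n \<ge> 3" and k1: "1 \<le> k" and kn: "k \<le> n - 2" and b1: "\<beta> > 1"
begin

definition comp :: "nat list" where
  "comp = [3] @ replicate (k - 1) 1 @ [\<beta>] @ replicate (n - k - 2) 1"

definition comp_entry :: "nat \<Rightarrow> nat" where
  "comp_entry r = (if r = 0 then 3 else if r = k then \<beta> else 1)"

lemma length_comp: "length comp = n - 1"
  using n3 k1 kn by (simp add: comp_def)

lemma nth_comp: "r < n - 1 \<Longrightarrow> comp ! r = comp_entry r"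
  using k1 kn by (cases r) (auto simp: comp_def comp_entry_def nth_append)

definition R :: "nat set" where "R = {1..<n-1} - {k}"
definition S :: "nat set" where "S = {k+1..<n-1}"
definition I1 :: "nat set" where "I1 = {1..<n-1}"

lemma finite_R: "finite R" by (simp add: R_def)

lemma index_cases: "r < n \<Longrightarrow> r = 0 \<or> r = k \<or> r = n - 1 \<or> r \<in> R"
  by (auto simp: R_def)

lemma lessThan_n_eq: "{..<n} = insert 0 (insert k (insert (n - 1) R))"
  using n3 k1 kn by (auto simp: R_def)

lemma sum_split: "(\<Sum>j<n. f j) = f 0 + f k + f (n - 1) + (\<Sum>j\<in>R. f j)"
proof -
  have "0 \<notin> insert k (insert (n - 1) R)" using n3 k1 kn by (auto simp: R_def)
  moreover have "k \<notin> insert (n - 1) R" using n3 k1 kn by (auto simp: R_def)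
  moreover have "n - 1 \<notin> R" by (auto simp: R_def)
  ultimately show ?thesis
    by (simp add: lessThan_n_eq finite_R add.assoc)
qed

definition mat :: "(nat \<Rightarrow> int) \<Rightarrow> (nat \<Rightarrow> int) \<Rightarrow> nat \<Rightarrow> nat \<Rightarrow> int" where
  "mat a b r s = (if r < n \<and> s < n then (if s = n - 1 then 1 else if r = s then P ^ comp_entry r
      else if r = 0 then P * a s else if r = k then P * b s else 0) else 0)"

lemma not_in_R: "k \<notin> R" "0 \<notin> R" "n - 1 \<notin> R" by (auto simp: R_def)
lemma R_bounds: "r \<in> R \<Longrightarrow> r < n - 1 \<and> r \<noteq> 0 \<and> r \<noteq> k"
  by (auto simp: R_def)
lemma k_bounds: "0 < k" "k < n - 1" "k < n" "0 < n - 1" using k1 kn n3 by auto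

lemma row_comb_last: "(\<Sum>j<n. c j * mat a b (n - 1) j) = c (n - 1)"
proof -
  have "\<And>j. j < n \<Longrightarrow> mat a b (n - 1) j = (if j = n - 1 then 1 else 0)"
    using k_bounds by (auto simp: mat_def comp_entry_def)
  hence "(\<Sum>j<n. c j * mat a b (n - 1) j) = (\<Sum>j<n. if j = n - 1 then c j else 0)"
    by (intro sum.cong) auto
  also have "\<dots> = c (n - 1)" using k_bounds by (simp add: sum.delta)
  finally show ?thesis .
qed

lemma row_comb_R: assumes "r \<in> R" shows "(\<Sum>j<n. c j * mat a b r j) = P * c r + c (n - 1)"
proof -
  have rn: "r < n" using R_bounds[OF assms] by auto
  have n1: "n - 1 < n" using k_bounds by simp
  have "\<And>j. j < n \<Longrightarrow> c j * mat a b r j = (if j = n - 1 then c j else 0)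
      + (if j = r then P * c j else 0)"
    using k_bounds R_bounds[OF assms] by (auto simp: mat_def comp_entry_def)
  hence "(\<Sum>j<n. c j * mat a b r j)
      = (\<Sum>j<n. (if j = n - 1 then c j else 0) + (if j = r then P * c j else 0))"
    by (intro sum.cong) auto
  also have "\<dots> = (\<Sum>j<n. (if j = n - 1 then c j else 0)) + (\<Sum>j<n. (if j = r then P * c j else 0))"
    by (rule sum.distrib)
  also have "\<dots> = c (n - 1) + P * c r" using rn n1
    by (simp only: sum.delta finite_lessThan lessThan_iff if_True)
  finally show ?thesis by simp
qed

lemma row_comb_k: assumes "b 0 = 0"
  shows "(\<Sum>j<n. c j * mat a b k j) = c (n - 1) + P ^ \<beta> * c k + P * (\<Sum>j\<in>R. b j * c j)"
proof -
  have "(\<Sum>j<n. c j * mat a b k j) = c 0 * mat a b k 0 + c k * mat a b k k + c (n - 1)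
      * mat a b k (n - 1)
     + (\<Sum>j\<in>R. c j * mat a b k j)" by (rule sum_split)
  also have "(\<Sum>j\<in>R. c j * mat a b k j) = (\<Sum>j\<in>R. P * (b j * c j))"
    using k_bounds by (intro sum.cong) (auto simp: mat_def R_def)
  finally show ?thesis using k_bounds assms by (simp add: mat_def comp_entry_def sum_distrib_left)
qed

lemma row_comb_0:
  shows "(\<Sum>j<n. c j * mat a b 0 j) = c (n - 1) + P ^ 3 * c 0 + P * a k * c k + P
      * (\<Sum>j\<in>R. a j * c j)"
proof -
  have "(\<Sum>j<n. c j * mat a b 0 j) = c 0 * mat a b 0 0 + c k * mat a b 0 k + c (n - 1)
      * mat a b 0 (n - 1)
     + (\<Sum>j\<in>R. c j * mat a b 0 j)" by (rule sum_split)
  also have "(\<Sum>j\<in>R. c j * mat a b 0 j) = (\<Sum>j\<in>R. P * (a j * c j))"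
    by (intro sum.cong) (auto simp: mat_def R_def)
  finally show ?thesis using k_bounds by (simp add: mat_def comp_entry_def sum_distrib_left)
qed

lemma in_col_span_mat_imp:
  assumes b0: "b 0 = 0" and w1: "w (n - 1) = 0"
    and "in_col_span n (mat a b) w"
  shows "(\<forall>r\<in>R. P dvd w r) \<and>
     (\<exists>ck c0. w k = P ^ \<beta> * ck + (\<Sum>j\<in>R. b j * w j) \<and> w 0 = P ^ 3 * c0 + P * a k * ck + (\<Sum>j\<in>R. a j * w j))"
proof -
  obtain c where c: "\<forall>r<n. w r = (\<Sum>j<n. c j * mat a b r j)" using assms(3)
    by (auto simp: in_col_span_def)
  have F: "w (n - 1) = (\<Sum>j<n. c j * mat a b (n - 1) j)" using k_bounds
    by (intro c[rule_format]) simp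
  have cn: "c (n - 1) = 0" using F w1 row_comb_last[of c a b] by linarith
  have cR: "w r = P * c r" if rR: "r \<in> R" for r
  proof -
    have "r < n" using R_bounds[OF rR] by auto
    hence "w r = (\<Sum>j<n. c j * mat a b r j)" using c by blast
    thus ?thesis using row_comb_R[OF rR, of c a b] cn by simp
  qed
  have "w k = P ^ \<beta> * c k + P * (\<Sum>j\<in>R. b j * c j)"
    using c[rule_format, of k] k_bounds cn row_comb_k[where b=b, OF b0] by simp
  moreover have "(\<Sum>j\<in>R. b j * w j) = P * (\<Sum>j\<in>R. b j * c j)"
    by (simp add: cR sum_distrib_left mult.left_commute)
  moreover have "w 0 = P ^ 3 * c 0 + P * a k * c k + P * (\<Sum>j\<in>R. a j * c j)"
    using c[rule_format, of 0] k_bounds cn row_comb_0 by simp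
  moreover have "(\<Sum>j\<in>R. a j * w j) = P * (\<Sum>j\<in>R. a j * c j)"
    by (simp add: cR sum_distrib_left mult.left_commute)
  ultimately show ?thesis
    using cR by auto
qed

lemma in_col_span_mat_if:
  assumes b0: "b 0 = 0" and w1: "w (n - 1) = 0"
    and "(\<forall>r\<in>R. P dvd w r) \<and>
     (\<exists>ck c0. w k = P ^ \<beta> * ck + (\<Sum>j\<in>R. b j * w j) \<and> w 0 = P ^ 3 * c0 + P * a k * ck + (\<Sum>j\<in>R. a j * w j))"
  shows "in_col_span n (mat a b) w"
proof -
  obtain ck c0 where dv: "\<forall>r\<in>R. P dvd w r" and
    hk: "w k = P ^ \<beta> * ck + (\<Sum>j\<in>R. b j * w j)"
      and h0: "w 0 = P ^ 3 * c0 + P * a k * ck + (\<Sum>j\<in>R. a j * w j)"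
    using assms(3) by blast
  define c where "c r
      = (if r \<in> R then w r div P else if r = k then ck else if r = 0 then c0 else 0)" for r
  have cR: "\<And>r. r \<in> R \<Longrightarrow> w r = P * c r" using dv by (auto simp: c_def)
  have cn: "c (n - 1) = 0" using not_in_R(3) k_bounds by (simp add: c_def)
  have ck: "c k = ck" using not_in_R by (simp add: c_def)
  have c0: "c 0 = c0" using not_in_R k_bounds by (simp add: c_def)
  have sb: "(\<Sum>j\<in>R. b j * w j) = P * (\<Sum>j\<in>R. b j * c j)"
    by (simp add: cR sum_distrib_left mult.left_commute)
  have sa: "(\<Sum>j\<in>R. a j * w j) = P * (\<Sum>j\<in>R. a j * c j)"
    by (simp add: cR sum_distrib_left mult.left_commute)
  have "\<forall>r<n. w r = (\<Sum>j<n. c j * mat a b r j)"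
  proof (intro allI impI)
    fix r assume "r < n"
    then consider "r = 0" | "r = k" | "r = n - 1" | "r \<in> R" using index_cases by blast
    thus "w r = (\<Sum>j<n. c j * mat a b r j)"
    proof cases
      case 1 thus ?thesis using h0 row_comb_0 cn ck c0 sa by simp
    next
      case 2 thus ?thesis using hk row_comb_k[where b=b, OF b0] cn ck sb by simp
    next
      case 3 thus ?thesis using row_comb_last cn w1 by simp
    next
      case 4 thus ?thesis using row_comb_R cR cn by simp
    qed
  qed
  thus ?thesis by (auto simp: in_col_span_def)
qed

lemma in_col_span_mat_iff:
  assumes b0: "b 0 = 0" and w1: "w (n - 1) = 0"
  shows "in_col_span n (mat a b) w \<longleftrightarrow> (\<forall>r\<in>R. P dvd w r) \<and>
     (\<exists>ck c0. w k = P ^ \<beta> * ck + (\<Sum>j\<in>R. b j * w j) \<and> w 0 = P ^ 3 * c0 + P * a k * ck + (\<Sum>j\<in>R. a j * w j))"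
  using in_col_span_mat_imp[of b w a] in_col_span_mat_if[of b w a] assms by blast

definition row_k_entry :: "(nat \<Rightarrow> int) \<Rightarrow> nat \<Rightarrow> int" where
  "row_k_entry b i = (if i = k then P ^ \<beta> else P * b i)"

(* ck and c0 are the coefficients of columns k and 0 in a representation of the product of
   columns i and j; the coefficients of the other columns are forced. *)
definition prod_cond :: "(nat \<Rightarrow> int) \<Rightarrow> (nat \<Rightarrow> int) \<Rightarrow> nat \<Rightarrow> nat \<Rightarrow> bool" where
  "prod_cond a b i j \<longleftrightarrow> (\<exists>ck c0.
     row_k_entry b i * row_k_entry b j = P ^ \<beta> * ck + (if i = j \<and> i \<in> R then P ^ 2 * b i else 0) \<and>
     (P * a i) * (P * a j) = P ^ 3 * c0 + P * a k * ck + (if i = j \<and> i \<in> R then P ^ 2 * a i else 0))"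

lemma I1_bounds: "i \<in> I1 \<Longrightarrow> 0 < i \<and> i < n - 1 \<and> i < n"
  by (auto simp: I1_def)

lemma in_col_span_col_prod_iff:
  assumes i: "i \<in> I1" and j: "j \<in> I1" and b0: "b 0 = 0"
  shows "in_col_span n (mat a b) (\<lambda>r. col (mat a b) i r * col (mat a b) j r) \<longleftrightarrow> prod_cond a b i j"
proof -
  define w where "w = (\<lambda>r. col (mat a b) i r * col (mat a b) j r)"
  have w1: "w (n - 1) = 0" using I1_bounds[OF i] I1_bounds[OF j] k_bounds
    by (auto simp: w_def col_def mat_def comp_entry_def)
  have wR: "w r = (if r = i \<and> r = j then P ^ 2 else 0)" if "r \<in> R" for r
    using R_bounds[OF that] I1_bounds[OF i] I1_bounds[OF j] k_bounds
    by (auto simp: w_def col_def mat_def comp_entry_def power2_eq_square)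
  have wk: "w k = row_k_entry b i * row_k_entry b j" using I1_bounds[OF i] I1_bounds[OF j] k_bounds
    by (auto simp: w_def col_def mat_def comp_entry_def row_k_entry_def)
  have w0: "w 0 = (P * a i) * (P * a j)" using I1_bounds[OF i] I1_bounds[OF j] k_bounds
    by (auto simp: w_def col_def mat_def comp_entry_def)
  have sb: "(\<Sum>r\<in>R. b r * w r) = (if i = j \<and> i \<in> R then P ^ 2 * b i else 0)"
  proof -
    have "(\<Sum>r\<in>R. b r * w r) = (\<Sum>r\<in>R. if r = i then (if i = j then P ^ 2 * b i else 0) else 0)"
      by (intro sum.cong) (auto simp: wR)
    also have "\<dots> = (if i = j \<and> i \<in> R then P ^ 2 * b i else 0)" using finite_R
      by (simp add: sum.delta)
    finally show ?thesis .
  qed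
  have sa: "(\<Sum>r\<in>R. a r * w r) = (if i = j \<and> i \<in> R then P ^ 2 * a i else 0)"
  proof -
    have "(\<Sum>r\<in>R. a r * w r) = (\<Sum>r\<in>R. if r = i then (if i = j then P ^ 2 * a i else 0) else 0)"
      by (intro sum.cong) (auto simp: wR)
    also have "\<dots> = (if i = j \<and> i \<in> R then P ^ 2 * a i else 0)" using finite_R
      by (simp add: sum.delta)
    finally show ?thesis .
  qed
  have dv: "\<forall>r\<in>R. P dvd w r" using wR by (auto simp: power2_eq_square)
  show ?thesis
    unfolding w_def[symmetric] in_col_span_mat_iff[where a=a and b=b
    and w=w, OF b0 w1] prod_cond_def
    using dv sb sa wk w0 by simp
qed

definition row0_params :: "(nat \<Rightarrow> int) set" where "row0_params = vecs_on I1 {0..<P ^ 2}"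
definition rowk_params :: "(nat \<Rightarrow> int) set" where "rowk_params = vecs_on S {0..<P ^ (\<beta> - 1)}"

lemma rowk_params_zero: "b \<in> rowk_params \<Longrightarrow> i \<notin> S \<Longrightarrow> b i = 0"
  by (auto simp: rowk_params_def vecs_on_def)
lemma row0_params_zero: "a \<in> row0_params \<Longrightarrow> i \<notin> I1 \<Longrightarrow> a i = 0"
  by (auto simp: row0_params_def vecs_on_def)

lemma all_col_prods_in_span_iff:
  assumes a: "a \<in> row0_params" and b: "b \<in> rowk_params"
  shows "(\<forall>i<n. \<forall>j<n. in_col_span n (mat a b) (\<lambda>r. col (mat a b) i r * col (mat a b) j r))
     \<longleftrightarrow> (\<forall>i\<in>I1. \<forall>j\<in>I1. prod_cond a b i j)"
proof
  have b0: "b 0 = 0" using rowk_params_zero[OF b] by (auto simp: S_def)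
  assume "\<forall>i<n. \<forall>j<n. in_col_span n (mat a b) (\<lambda>r. col (mat a b) i r * col (mat a b) j r)"
  thus "\<forall>i\<in>I1. \<forall>j\<in>I1. prod_cond a b i j"
    using in_col_span_col_prod_iff[where a=a and b=b, OF _ _ b0] I1_bounds by blast
next
  have b0: "b 0 = 0" using rowk_params_zero[OF b] by (auto simp: S_def)
  assume H: "\<forall>i\<in>I1. \<forall>j\<in>I1. prod_cond a b i j"
  have one: "in_col_span n (mat a b) (\<lambda>r. col (mat a b) i r * col (mat a b) j r)"
    if "i < n" "j < n" "i = n - 1" for i j
    by (rule in_col_span_multiple[where m = j and t = 1]) (use that in \<open>auto simp: col_def mat_def\<close>)
  have zero: "in_col_span n (mat a b) (\<lambda>r. col (mat a b) i r * col (mat a b) j r)"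
    if "i < n" "j < n" "i = 0" "j \<noteq> n - 1" for i j
    by (rule in_col_span_multiple[where m = 0
    and t = "mat a b 0 j"]) (use that k_bounds b0 in \<open>auto simp: col_def mat_def comp_entry_def\<close>)
  show "\<forall>i<n. \<forall>j<n. in_col_span n (mat a b) (\<lambda>r. col (mat a b) i r * col (mat a b) j r)"
  proof (intro allI impI)
    fix i j assume ij: "i < n" "j < n"
    show "in_col_span n (mat a b) (\<lambda>r. col (mat a b) i r * col (mat a b) j r)"
    proof (cases "i = n - 1 \<or> j = n - 1")
      case True
      thus ?thesis using one[OF ij] one[OF ij(2,1)] by (auto simp: mult.commute)
    next
      case False
      show ?thesis
      proof (cases "i = 0 \<or> j = 0")
        case True
        thus ?thesis using zero[OF ij] zero[OF ij(2,1)] False by (auto simp: mult.commute)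
      next
        case False2: False
        have "i \<in> I1" "j \<in> I1" using ij False False2 by (auto simp: I1_def)
        thus ?thesis using in_col_span_col_prod_iff[where a=a and b=b, OF _ _ b0] H by blast
      qed
    qed
  qed
qed

lemma irr_subring_matrices_comp:
  "irr_subring_matrices comp p =
    {A. (\<forall>i j. (n \<le> i \<or> n \<le> j) \<longrightarrow> A i j = 0)
       \<and> (\<forall>i j. j < i \<longrightarrow> A i j = 0)
       \<and> (\<forall>r < n - 1. A r r = P ^ comp_entry r)
       \<and> A (n - 1) (n - 1) = 1
       \<and> (\<forall>r < n. A r (n - 1) = 1)
       \<and> (\<forall>r s. r < s \<and> s < n - 1 \<longrightarrow>
              (\<exists>a :: int. A r s = P * a) \<and> 0 \<le> A r s \<and> A r s < P ^ comp_entry r)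
       \<and> (\<forall>i<n. \<forall>j<n. in_col_span n A (\<lambda>r. col A i r * col A j r))}"
proof -
  have nn: "length comp + 1 = n" using length_comp k_bounds by simp
  show ?thesis unfolding irr_subring_matrices_def Let_def nn
    using nth_comp by (intro Collect_cong) (auto)
qed

lemma mat_shape:
  assumes a: "a \<in> row0_params" and b: "b \<in> rowk_params"
  shows "(\<forall>i j. (n \<le> i \<or> n \<le> j) \<longrightarrow> mat a b i j = 0)
       \<and> (\<forall>i j. j < i \<longrightarrow> mat a b i j = 0)
       \<and> (\<forall>r < n - 1. mat a b r r = P ^ comp_entry r)
       \<and> mat a b (n - 1) (n - 1) = 1
       \<and> (\<forall>r < n. mat a b r (n - 1) = 1)
       \<and> (\<forall>r s. r < s \<and> s < n - 1 \<longrightarrow>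
              (\<exists>c :: int. mat a b r s = P * c) \<and> 0 \<le> mat a b r s \<and> mat a b r s < P ^ comp_entry r)"
proof (intro conjI allI impI)
  fix i j :: nat assume "j < i"
  thus "mat a b i j = 0" using rowk_params_zero[OF b, of j] k_bounds by (auto simp: mat_def S_def)
next
  fix r s :: nat assume rs: "r < s \<and> s < n - 1"
  have Pp: "P > 0" using P_gt_1 by simp
  show "\<exists>c. mat a b r s = P * c"
    using rs by (auto simp: mat_def)
  have ab: "0 \<le> a s \<and> a s < P ^ 2" if "r = 0"
    using a rs that by (auto simp: row0_params_def vecs_on_def I1_def)
  have bb: "0 \<le> b s \<and> b s < P ^ (\<beta> - 1)" if "r = k"
    using b rs that by (auto simp: rowk_params_def vecs_on_def S_def)
  show "0 \<le> mat a b r s" using rs ab bb Pp by (auto simp: mat_def)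
  have e1: "P * P ^ (\<beta> - 1) = P ^ \<beta>" using b1 by (simp add: power_eq_if[of P \<beta>])
  have e2: "P * P ^ 2 = P ^ 3" by (simp add: power_eq_if)
  have sn: "s \<noteq> n - 1" "s < n" "r \<noteq> s" using rs by auto
  show "mat a b r s < P ^ comp_entry r"
  proof (cases "r = 0")
    case True
    have "P * a s < P * P ^ 2" by (rule mult_strict_left_mono) (use ab True Pp in auto)
    thus ?thesis using True sn e2 by (simp add: mat_def comp_entry_def)
  next
    case r0: False
    show ?thesis
    proof (cases "r = k")
      case True
      have "P * b s < P * P ^ (\<beta> - 1)"
        by (rule mult_strict_left_mono) (use bb True Pp in auto)
      thus ?thesis using True sn e1 r0 k_bounds by (simp add: mat_def comp_entry_def)
    next
      case False thus ?thesis using r0 sn Pp by (simp add: mat_def comp_entry_def)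
    qed
  qed
qed (use k_bounds in \<open>auto simp: mat_def comp_entry_def\<close>)

lemma inj_mat: "inj_on (\<lambda>(a, b). mat a b) (row0_params \<times> rowk_params)"
proof (rule inj_onI, clarsimp)
  fix a b a' b' assume a: "a \<in> row0_params" "a' \<in> row0_params"
    and b: "b \<in> rowk_params" "b' \<in> rowk_params" and eq: "mat a b = mat a' b'"
  have Pn: "P \<noteq> 0" using P_gt_1 by simp
  show "a = a' \<and> b = b'"
  proof
    show "a = a'"
    proof
      fix s show "a s = a' s"
      proof (cases "s \<in> I1")
        case True
        have "mat a b 0 s = mat a' b' 0 s" using eq by simp
        thus ?thesis using True I1_bounds[OF True] Pn by (simp add: mat_def)
      next
        case False thus ?thesis using row0_params_zero a by metis
      qed
    qed
    show "b = b'"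
    proof
      fix s show "b s = b' s"
      proof (cases "s \<in> S")
        case True
        have "mat a b k s = mat a' b' k s" using eq by simp
        moreover have "s \<noteq> n - 1" "s \<noteq> k" "s < n" "k \<noteq> s" "k < n" "k \<noteq> 0"
          using True k_bounds by (auto simp: S_def)
        ultimately show ?thesis using Pn by (simp add: mat_def)
      next
        case False thus ?thesis using rowk_params_zero b by metis
      qed
    qed
  qed
qed

definition params :: "((nat \<Rightarrow> int) \<times> (nat \<Rightarrow> int)) set" where
  "params = {(a, b). a \<in> row0_params \<and> b \<in> rowk_params \<and> (\<forall>i\<in>I1. \<forall>j\<in>I1. prod_cond a b i j)}"

lemma irr_upper_entry_digits:
  assumes "A \<in> irr_subring_matrices comp p" and rs: "r < s" "s < n - 1"
  shows "A r s = P * (A r s div P)" "0 \<le> A r s div P" "A r s div P < P ^ (comp_entry r - 1)"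
proof -
  have Pp: "P > 0" using P_gt_1 by simp
  obtain c where c: "A r s = P * c" and bounds: "0 \<le> P * c" "P * c < P * P ^ (comp_entry r - 1)"
  proof -
    have "Suc (comp_entry r - 1) = comp_entry r" using b1 by (simp add: comp_entry_def)
    hence "P ^ comp_entry r = P * P ^ (comp_entry r - 1)" by (metis power_Suc)
    moreover have "(\<exists>a. A r s = P * a) \<and> 0 \<le> A r s \<and> A r s < P ^ comp_entry r"
      using assms unfolding irr_subring_matrices_comp by auto
    ultimately show ?thesis using that by auto
  qed
  have "A r s div P = c" using c Pp by simp
  thus "A r s = P * (A r s div P)" "0 \<le> A r s div P" "A r s div P < P ^ (comp_entry r - 1)"
    using c bounds Pp by (simp_all add: zero_le_mult_iff)
qed

lemma irr_matrix_eq_mat: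
  assumes A: "A \<in> irr_subring_matrices comp p"
  obtains a b where "a \<in> row0_params" "b \<in> rowk_params" "A = mat a b"
proof -
  have outside: "\<forall>i j. (n \<le> i \<or> n \<le> j) \<longrightarrow> A i j = 0"
    and lower: "\<forall>i j. j < i \<longrightarrow> A i j = 0"
    and diag: "\<forall>r < n - 1. A r r = P ^ comp_entry r"
    and last: "\<forall>r < n. A r (n - 1) = 1"
    using A unfolding irr_subring_matrices_comp by auto
  note upper_div = irr_upper_entry_digits[OF A]
  define a where "a s = (if s \<in> I1 then A 0 s div P else 0)" for s
  define b where "b s = (if s \<in> S then A k s div P else 0)" for s
  have upper_entry: "A r s = mat a b r s" if rs: "r < s" "s < n - 1" for r s
  proof (cases "r = 0 \<or> r = k")
    case True
    hence "mat a b r s = P * (A r s div P)"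
      using rs k_bounds by (auto simp: mat_def a_def b_def I1_def S_def)
    thus ?thesis using upper_div(1)[OF rs] by linarith
  next
    case False
    hence "A r s div P < 1" using upper_div(3)[OF rs] by (simp add: comp_entry_def)
    hence "A r s div P = 0" using upper_div(2)[OF rs] by linarith
    hence "A r s = 0" using upper_div(1)[OF rs] by (metis mult_zero_right)
    thus ?thesis using False rs by (simp add: mat_def)
  qed
  have "A r s = mat a b r s" for r s
  proof -
    consider "\<not> (r < n \<and> s < n)" | "r < n" "s = n - 1" | "s < n - 1" "r = s" | "s < n - 1" "s < r"
      | "s < n - 1" "r < s"
      using less_linear[of r s] by (cases "r < n \<and> s < n"; cases "s = n - 1") auto
    thus ?thesis
    proof cases
      case 1 thus ?thesis using outside by (auto simp: mat_def)
    next
      case 2 thus ?thesis using last by (simp add: mat_def)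
    next
      case 3 thus ?thesis using diag by (simp add: mat_def)
    next
      case 4
      have "r = k \<Longrightarrow> b s = 0" using 4 by (simp add: b_def S_def)
      thus ?thesis using 4 lower by (simp add: mat_def)
    next
      case 5 thus ?thesis using upper_entry by blast
    qed
  qed
  hence "A = mat a b" by blast
  moreover have "a \<in> row0_params"
    using upper_div(2,3)[of 0]
    by (auto simp: row0_params_def vecs_on_def a_def I1_def comp_entry_def)
  moreover have "b \<in> rowk_params"
    using upper_div(2,3)[of k] k_bounds
    by (auto simp: rowk_params_def vecs_on_def b_def S_def comp_entry_def)
  ultimately show ?thesis using that by blast
qed

lemma irr_subring_matrices_eq_image: "irr_subring_matrices comp p = (\<lambda>(a, b). mat a b) ` params"
proof
  show "(\<lambda>(a, b). mat a b) ` params \<subseteq> irr_subring_matrices comp p"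
  proof
    fix A assume "A \<in> (\<lambda>(a, b). mat a b) ` params"
    then obtain a b where A: "A = mat a b"
      and ab: "a \<in> row0_params" "b \<in> rowk_params" "\<forall>i\<in>I1. \<forall>j\<in>I1. prod_cond a b i j"
      by (auto simp: params_def)
    show "A \<in> irr_subring_matrices comp p"
      unfolding irr_subring_matrices_comp A
      using mat_shape[OF ab(1,2)] all_col_prods_in_span_iff[OF ab(1,2)] ab(3)
      by (simp only: mem_Collect_eq) blast
  qed
  show "irr_subring_matrices comp p \<subseteq> (\<lambda>(a, b). mat a b) ` params"
  proof
    fix A assume A: "A \<in> irr_subring_matrices comp p"
    then obtain a b where ab: "a \<in> row0_params" "b \<in> rowk_params" "A = mat a b"
      by (rule irr_matrix_eq_mat)
    from A have "\<forall>i<n. \<forall>j<n. in_col_span n A (\<lambda>r. col A i r * col A j r)"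
      unfolding irr_subring_matrices_comp mem_Collect_eq by (elim conjE)
    hence "\<forall>i\<in>I1. \<forall>j\<in>I1. prod_cond a b i j"
      using all_col_prods_in_span_iff[OF ab(1,2)] ab(3) by simp
    thus "A \<in> (\<lambda>(a, b). mat a b) ` params" using ab unfolding params_def by auto
  qed
qed

lemma g_eq_card_params: "g comp p = card params"
proof -
  have "inj_on (\<lambda>(a, b). mat a b) params"
    using inj_mat by (rule inj_on_subset) (auto simp: params_def)
  thus ?thesis unfolding g_def irr_subring_matrices_eq_image by (rule card_image)
qed

end

section \<open>Reduction to a congruence system\<close>

context three_beta_comp begin

abbreviation "q \<equiv> P ^ (\<beta> - 2)"

definition core_cond :: "int \<Rightarrow> (nat \<Rightarrow> int) \<Rightarrow> (nat \<Rightarrow> int) \<Rightarrow> bool" where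
  "core_cond \<kappa> \<alpha> b \<longleftrightarrow> (\<forall>i\<in>R. \<forall>j\<in>R. q dvd idem_defect b i j
     \<and> P dvd idem_defect \<alpha> i j - \<kappa> * (idem_defect b i j div q))"

definition reduced :: "(nat \<Rightarrow> int) \<Rightarrow> (nat \<Rightarrow> int) \<Rightarrow> bool" where
  "reduced a b \<longleftrightarrow> P dvd a k \<and> core_cond (a k div P) a b"

lemma P_power_beta_eq_q: "P ^ \<beta> = P ^ 2 * q"
proof -
  obtain m where m: "\<beta> = Suc (Suc m)" using b1
    by (metis Suc_diff_Suc diff_Suc_1 less_imp_Suc_add plus_1_eq_Suc)
  show ?thesis by (simp add: m power2_eq_square)
qed

lemma P_power_beta_Suc: "P ^ \<beta> = P * P ^ (\<beta> - 1)"
  using b1 by (simp add: power_eq_if[of P \<beta>])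

lemma q_pos: "q > 0" using P_gt_1 by simp

lemma I1_eq_insert_k_R: "I1 = insert k R" using k_bounds by (auto simp: I1_def R_def)

lemma prod_cond_kk: "prod_cond a b k k \<longleftrightarrow> P dvd a k"
proof
  have Pn: "P \<noteq> 0" using P_gt_1 by simp
  assume "prod_cond a b k k"
  then obtain ck c0 where e1: "P ^ \<beta> * P ^ \<beta> = P ^ \<beta> * ck"
    and e2: "(P * a k) * (P * a k) = P ^ 3 * c0 + P * a k * ck"
    using not_in_R by (auto simp: prod_cond_def row_k_entry_def)
  have "ck = P ^ \<beta>" using e1 Pn by simp
  hence "P ^ 2 * (a k * a k) = P ^ 2 * (P * c0 + a k * P ^ (\<beta> - 1))" using e2 P_power_beta_Suc
    by (simp add: algebra_simps power2_eq_square power3_eq_cube)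
  hence "a k * a k = P * c0 + a k * P ^ (\<beta> - 1)" using Pn by simp
  moreover have "P dvd P ^ (\<beta> - 1)" using b1 by (simp add: dvd_power)
  ultimately have "P dvd a k * a k" by (metis dvd_add dvd_mult dvd_triv_left)
  thus "P dvd a k" using prime_P by (simp add: prime_dvd_mult_iff)
next
  assume "P dvd a k"
  then obtain \<kappa> where kk: "a k = P * \<kappa>" by blast
  have "P ^ \<beta> * P ^ \<beta> = P ^ \<beta> * P ^ \<beta> + 0 \<and>
     (P * a k) * (P * a k) = P ^ 3 * (P * \<kappa> * \<kappa> - \<kappa> * P ^ (\<beta> - 1)) + P * a k * P ^ \<beta> + 0"
    using P_power_beta_Suc kk by (simp add: algebra_simps power2_eq_square power3_eq_cube)
  thus "prod_cond a b k k" using not_in_R unfolding prod_cond_def row_k_entry_def by auto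
qed

lemma prod_cond_kj:
  assumes j: "j \<in> R" and dk: "P dvd a k"
  shows "prod_cond a b k j" "prod_cond a b j k"
proof -
  obtain \<kappa> where kk: "a k = P * \<kappa>" using dk by blast
  have jk: "j \<noteq> k" using j not_in_R by auto
  have "P ^ \<beta> * (P * b j) = P ^ \<beta> * (P * b j) + 0 \<and>
     (P * a k) * (P * a j) = P ^ 3 * (\<kappa> * (a j - b j)) + P * a k * (P * b j) + 0"
    using kk by (simp add: algebra_simps power3_eq_cube)
  thus "prod_cond a b k j" using jk unfolding prod_cond_def row_k_entry_def by auto
  have "(P * b j) * P ^ \<beta> = P ^ \<beta> * (P * b j) + 0 \<and>
     (P * a j) * (P * a k) = P ^ 3 * (\<kappa> * (a j - b j)) + P * a k * (P * b j) + 0"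
    using kk by (simp add: algebra_simps power3_eq_cube)
  thus "prod_cond a b j k" using jk unfolding prod_cond_def row_k_entry_def by auto
qed

lemma prod_cond_ij:
  assumes i: "i \<in> R" and j: "j \<in> R" and dk: "P dvd a k"
  shows "prod_cond a b i j \<longleftrightarrow> q dvd idem_defect b i j \<and> P dvd idem_defect a i j - (a k div P)
      * (idem_defect b i j div q)"
proof -
  have Pn: "P \<noteq> 0" using P_gt_1 by simp
  obtain \<kappa> where kk: "a k = P * \<kappa>" using dk by blast
  have kd: "a k div P = \<kappa>" using kk Pn by simp
  have ik: "i \<noteq> k" "j \<noteq> k" using i j not_in_R by auto
  have c: "prod_cond a b i j \<longleftrightarrow> (\<exists>ck c0. P ^ 2 * idem_defect b i j = P ^ 2 * (q * ck) \<and>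
      P ^ 2 * idem_defect a i j = P ^ 2 * (P * c0 + \<kappa> * ck))"
    unfolding prod_cond_def row_k_entry_def idem_defect_def using ik i P_power_beta_eq_q kk
    by (intro ex_cong1 conj_cong refl) (auto simp: algebra_simps power2_eq_square power3_eq_cube)
  also have "\<dots> \<longleftrightarrow> (\<exists>ck c0. idem_defect b i j = q * ck \<and> idem_defect a i j = P * c0 + \<kappa> * ck)"
    using Pn by simp
  also have "\<dots> \<longleftrightarrow> q dvd idem_defect b i j \<and> P dvd idem_defect a i j - \<kappa> * (idem_defect b i j div q)"
  proof
    assume "\<exists>ck c0. idem_defect b i j = q * ck \<and> idem_defect a i j = P * c0 + \<kappa> * ck"
    then obtain ck c0 where h: "idem_defect b i j = q * ck" "idem_defect a i j = P * c0 + \<kappa> * ck"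
      by blast
    have qn: "q \<noteq> 0" using q_pos by linarith
    have "idem_defect b i j div q = ck" using qn by (simp add: h(1))
    thus "q dvd idem_defect b i j \<and> P dvd idem_defect a i j - \<kappa> * (idem_defect b i j div q)"
      using h by simp
  next
    assume h: "q dvd idem_defect b i j \<and> P dvd idem_defect a i j - \<kappa> * (idem_defect b i j div q)"
    then obtain c0 where c0: "idem_defect a i j - \<kappa> * (idem_defect b i j div q) = P * c0"
      by blast
    have "idem_defect b i j = q * (idem_defect b i j div q)" using h by simp
    moreover have "idem_defect a i j = P * c0 + \<kappa> * (idem_defect b i j div q)" using c0
      by simp
    ultimately show "\<exists>ck c0. idem_defect b i j = q * ck \<and> idem_defect a i j = P * c0 + \<kappa> * ck"
      by blast
  qed
  finally show ?thesis using kd by simp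
qed

lemma prod_cond_iff_reduced: "(\<forall>i\<in>I1. \<forall>j\<in>I1. prod_cond a b i j) \<longleftrightarrow> reduced a b"
proof
  assume H: "\<forall>i\<in>I1. \<forall>j\<in>I1. prod_cond a b i j"
  have dk: "P dvd a k" using H prod_cond_kk I1_eq_insert_k_R by auto
  thus "reduced a b"
    using H prod_cond_ij[where a=a and b=b, OF _ _ dk] I1_eq_insert_k_R
    unfolding reduced_def core_cond_def by auto
next
  assume C: "reduced a b"
  hence dk: "P dvd a k" by (simp add: reduced_def)
  show "\<forall>i\<in>I1. \<forall>j\<in>I1. prod_cond a b i j"
    unfolding I1_eq_insert_k_R
    using C prod_cond_kk prod_cond_kj[where a=a and b=b, OF _ dk] prod_cond_ij[where a=a
    and b=b, OF _ _ dk]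
    unfolding reduced_def core_cond_def by auto
qed

definition core :: "(int \<times> (nat \<Rightarrow> int) \<times> (nat \<Rightarrow> int)) set" where
  "core = {(\<kappa>, \<alpha>, b). \<kappa> \<in> Pr \<and> \<alpha> \<in> vecs_on R Pr \<and> b \<in> rowk_params \<and> core_cond \<kappa> \<alpha> b}"

lemma card_R: "card R = n - 3"
proof -
  have "card R = card {1..<n-1} - 1" unfolding R_def using k_bounds
    by (subst card_Diff_singleton) (auto)
  thus ?thesis by simp
qed

lemma core_cond_mod_cong:
  assumes "\<forall>s\<in>R. a s mod P = \<alpha> s mod P"
  shows "core_cond \<kappa> a b \<longleftrightarrow> core_cond \<kappa> \<alpha> b"
proof -
  have "P dvd idem_defect a i j - x \<longleftrightarrow> P dvd idem_defect \<alpha> i j - x" if "i \<in> R" "j \<in> R" for i j x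
    using idem_defect_mod_cong[of a i P \<alpha> j] assms that
    by (metis mod_diff_cong mod_eq_dvd_iff)
  thus ?thesis unfolding core_cond_def by blast
qed

definition low_digits :: "(nat \<Rightarrow> int) \<Rightarrow> nat \<Rightarrow> int" where
  "low_digits a = (\<lambda>s. if s \<in> R then a s mod P else 0)"

definition high_digits :: "(nat \<Rightarrow> int) \<Rightarrow> nat \<Rightarrow> int" where
  "high_digits a = (\<lambda>s. if s \<in> R then a s div P else 0)"

definition row0_of_digits :: "int \<Rightarrow> (nat \<Rightarrow> int) \<Rightarrow> (nat \<Rightarrow> int) \<Rightarrow> nat \<Rightarrow> int" where
  "row0_of_digits \<kappa> \<alpha> h = (\<lambda>s. if s \<in> R then \<alpha> s + P * h s else if s = k then P * \<kappa> else 0)"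

lemma digits_in_range:
  assumes "a \<in> row0_params"
  shows "a k div P \<in> Pr" "low_digits a \<in> vecs_on R Pr" "high_digits a \<in> vecs_on R Pr"
proof -
  have Pp: "P > 0" using P_gt_1 by simp
  have a: "0 \<le> a s" "a s < P * P" if "s \<in> I1" for s
    using assms that by (auto simp: row0_params_def vecs_on_def power2_eq_square)
  show "a k div P \<in> Pr" using a[of k] Pp I1_eq_insert_k_R
    by (auto simp: pos_imp_zdiv_nonneg_iff intro: zdiv_less_if_less_mult)
  show "low_digits a \<in> vecs_on R Pr" using Pp by (auto simp: low_digits_def vecs_on_def)
  show "high_digits a \<in> vecs_on R Pr" using a Pp I1_eq_insert_k_R
    by (auto simp: high_digits_def vecs_on_def pos_imp_zdiv_nonneg_iff intro: zdiv_less_if_less_mult)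
qed

lemma row0_of_digits_in_range:
  assumes "\<kappa> \<in> Pr" "\<alpha> \<in> vecs_on R Pr" "h \<in> vecs_on R Pr"
  shows "row0_of_digits \<kappa> \<alpha> h \<in> row0_params"
proof -
  have "0 \<le> row0_of_digits \<kappa> \<alpha> h s \<and> row0_of_digits \<kappa> \<alpha> h s < P ^ 2" if "s \<in> I1" for s
  proof (cases "s \<in> R")
    case True
    have h: "0 \<le> h s" "h s \<le> P - 1" "0 \<le> \<alpha> s" "\<alpha> s < P" using assms True
      by (auto simp: vecs_on_def)
    have "P * h s \<le> P * (P - 1)" using h P_gt_1 by (intro mult_left_mono) auto
    thus ?thesis using h True by (simp add: row0_of_digits_def power2_eq_square algebra_simps)
  next
    case False
    hence "s = k" using that I1_eq_insert_k_R by auto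
    thus ?thesis using assms(1) P_gt_1 not_in_R by (auto simp: row0_of_digits_def power2_eq_square)
  qed
  moreover have "row0_of_digits \<kappa> \<alpha> h s = 0" if "s \<notin> I1" for s
    using that by (auto simp: row0_of_digits_def I1_eq_insert_k_R)
  ultimately show ?thesis by (simp add: row0_params_def vecs_on_def)
qed

lemma row0_of_digits_inverse:
  assumes "a \<in> row0_params" "P dvd a k"
  shows "row0_of_digits (a k div P) (low_digits a) (high_digits a) = a"
  using assms row0_params_zero[OF assms(1)]
  by (auto simp: row0_of_digits_def low_digits_def high_digits_def fun_eq_iff I1_eq_insert_k_R)

lemma digits_of_row0_of_digits:
  assumes "\<alpha> \<in> vecs_on R Pr" "h \<in> vecs_on R Pr"
  shows "row0_of_digits \<kappa> \<alpha> h k div P = \<kappa>" "low_digits (row0_of_digits \<kappa> \<alpha> h) = \<alpha>"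
    "high_digits (row0_of_digits \<kappa> \<alpha> h) = h"
  using assms P_gt_1 not_in_R
  by (auto simp: row0_of_digits_def low_digits_def high_digits_def vecs_on_def fun_eq_iff)

lemma params_reduced: "params = {(a, b). a \<in> row0_params \<and> b \<in> rowk_params \<and> reduced a b}"
  unfolding params_def prod_cond_iff_reduced ..

lemma core_cond_low_digits: "core_cond \<kappa> (low_digits a) b \<longleftrightarrow> core_cond \<kappa> a b"
  by (rule core_cond_mod_cong) (simp add: low_digits_def)

lemma core_cond_row0_of_digits:
  "\<alpha> \<in> vecs_on R Pr \<Longrightarrow> core_cond \<kappa> (row0_of_digits \<kappa>' \<alpha> h) b \<longleftrightarrow> core_cond \<kappa> \<alpha> b"
  by (rule core_cond_mod_cong) (simp add: row0_of_digits_def)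

lemma card_params: "card params = card core * p ^ (n - 3)"
proof -
  define F where "F = (\<lambda>(a, b :: nat \<Rightarrow> int). ((a k div P, low_digits a, b), high_digits a))"
  define G where "G = (\<lambda>((\<kappa>, \<alpha>, b :: nat \<Rightarrow> int), h). (row0_of_digits \<kappa> \<alpha> h, b))"
  have "bij_betw F params (core \<times> vecs_on R Pr)"
  proof (rule bij_betw_byWitness[where f' = G])
    show "\<forall>x\<in>params. G (F x) = x"
      using row0_of_digits_inverse by (auto simp: params_reduced reduced_def F_def G_def)
    show "\<forall>y\<in>core \<times> vecs_on R Pr. F (G y) = y"
      using digits_of_row0_of_digits by (auto simp: core_def F_def G_def)
    show "F ` params \<subseteq> core \<times> vecs_on R Pr"
      using digits_in_range core_cond_low_digits
      by (auto simp: params_reduced reduced_def core_def F_def)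
    show "G ` (core \<times> vecs_on R Pr) \<subseteq> params"
      using row0_of_digits_in_range digits_of_row0_of_digits(1) core_cond_row0_of_digits
      by (fastforce simp: params_reduced reduced_def core_def G_def row0_of_digits_def not_in_R)
  qed
  hence "card params = card (core \<times> vecs_on R Pr)" by (rule bij_betw_same_card)
  also have "\<dots> = card core * p ^ (n - 3)"
    using finite_R card_R by (simp add: card_cartesian_product card_vecs_on)
  finally show ?thesis .
qed
end

section \<open>Counting the solutions for beta = 2\<close>

abbreviation twin_vec :: "int \<Rightarrow> int \<Rightarrow> nat \<Rightarrow> nat \<Rightarrow> nat \<Rightarrow> int" where
  "twin_vec Q v i j \<equiv> pair_vec v i (Q + 1 - v) j"

locale defect_count = prime_residues +
  fixes R S :: "nat set"
  assumes finite_R: "finite R" and S_subset_R: "S \<subseteq> R"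
begin

lemma finite_S: "finite S" using finite_R S_subset_R finite_subset by blast

definition defect_sols :: "(int \<times> (nat \<Rightarrow> int) \<times> (nat \<Rightarrow> int)) set" where
  "defect_sols = {(\<kappa>, \<alpha>, b). \<kappa> \<in> Pr \<and> \<alpha> \<in> vecs_on R Pr \<and> b \<in> vecs_on S Pr \<and>
     (\<forall>i\<in>R. \<forall>j\<in>R. P dvd idem_defect \<alpha> i j - \<kappa> * idem_defect b i j)}"

definition "ds_kappa0 = {(0::int, \<alpha>, b) | \<alpha> b. \<alpha> \<in> zero_or_basis R \<and> b \<in> vecs_on S Pr}"
definition "ds_diag = {(1::int, b, b) | b. b \<in> vecs_on S Pr}"
definition "ds_b_zero = {(\<kappa>, \<alpha>, \<lambda>_::nat. 0::int) | \<kappa> \<alpha>. \<kappa> \<in> {1..<P} \<and> \<alpha> \<in> zero_or_basis R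
   \<and> \<not> (\<kappa> = 1 \<and> \<alpha> = (\<lambda>_. 0))}"
definition "ds_b_basis = {(\<kappa>, \<alpha>, basis_vec j) | \<kappa> \<alpha> j. j \<in> S \<and> \<kappa> \<in> {1..<P} \<and> \<alpha> \<in> zero_or_basis R
   \<and> \<not> (\<kappa> = 1 \<and> \<alpha> = basis_vec j)}"
definition "ds_b_single = {(\<kappa>, single_vec v j, single_vec c j) | \<kappa> v c j. j \<in> S \<and> c \<in> {2..<P}
   \<and> v \<in> {2..<P} \<and> v \<noteq> c \<and> \<kappa> \<in> {1..<P} \<and> P dvd (c * c - c) * \<kappa> - (v * v - v)}"
definition "ds_b_twin = {(\<kappa>, twin_vec P v i j, twin_vec P c i j) | \<kappa> v c i j. i \<in> S \<and> j \<in> S \<and> i < j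
   \<and> c \<in> {2..<P} \<and> v \<in> {2..<P} \<and> v \<noteq> c \<and> \<kappa> \<in> {1..<P} \<and> P dvd (c * c - c) * \<kappa> - (v * v - v)}"

context
  fixes \<kappa> :: int and \<alpha> b :: "nat \<Rightarrow> int"
  assumes cong: "\<forall>i\<in>R. \<forall>j\<in>R. P dvd idem_defect \<alpha> i j - \<kappa> * idem_defect b i j"
    and alpha_vec: "\<alpha> \<in> vecs_on R Pr" and b_vec: "b \<in> vecs_on S Pr" and kappa_unit: "\<kappa> \<in> {1..<P}"
begin

lemma defect_sol_facts:
  "\<alpha> s \<in> Pr" "b s \<in> Pr" "s \<notin> R \<Longrightarrow> \<alpha> s = 0" "b s \<noteq> 0 \<Longrightarrow> s \<in> S" "\<not> P dvd \<kappa>"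
  using alpha_vec b_vec kappa_unit not_dvd_nonzero_residue[of \<kappa>]
  by (auto simp: vecs_on_Pr_range) (auto simp: vecs_on_def)

lemma defect_sol_alpha_zero:
  assumes "m \<noteq> l" "l \<in> R" "\<alpha> l \<noteq> 0" "b m * b l = 0"
  shows "\<alpha> m = 0"
proof (cases "m \<in> R")
  case True
  have "P dvd \<alpha> m * \<alpha> l" using cong True assms
    by (metis idem_defect_off_diag diff_zero mult_zero_right)
  thus ?thesis using residue_zero_if_dvd_mult defect_sol_facts(1) assms(3) by blast
qed (use defect_sol_facts(3) in blast)

lemma defect_sol_three_support:
  assumes ijm: "i \<in> R" "j \<in> R" "m \<in> R" "i \<noteq> j" "i \<noteq> m" "j \<noteq> m"
    and nz: "b i \<noteq> 0" "b j \<noteq> 0" "b m \<noteq> 0"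
  shows "\<alpha> i = b i \<and> \<kappa> = 1"
proof -
  have bn: "\<not> P dvd b i" "\<not> P dvd b j" "\<not> P dvd b m"
    using nz not_dvd_nonzero_residue defect_sol_facts(2) by auto
  have Oij: "P dvd \<alpha> i * \<alpha> j - \<kappa> * (b i * b j)"
    and Oim: "P dvd \<alpha> i * \<alpha> m - \<kappa> * (b i * b m)"
    and Ojm: "P dvd \<alpha> j * \<alpha> m - \<kappa> * (b j * b m)"
    and Di: "P dvd (\<alpha> i * \<alpha> i - \<alpha> i) - \<kappa> * (b i * b i - b i)"
    using cong ijm by (metis idem_defect_off_diag idem_defect_diag)+
  \<comment> \<open>the three off-diagonal congruences combine to eliminate the entries at j and m\<close>
  have "\<kappa> * b j * b m * (\<alpha> i * \<alpha> i - \<kappa> * b i * b i) =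
      \<alpha> i * \<alpha> i * (-(\<alpha> j * \<alpha> m - \<kappa> * (b j * b m))) + \<alpha> i * \<alpha> m * (\<alpha> i * \<alpha> j - \<kappa> * (b i * b j))
      + \<kappa> * b i * b j * (\<alpha> i * \<alpha> m - \<kappa> * (b i * b m))"
    by (simp add: algebra_simps)
  hence "P dvd \<kappa> * b j * b m * (\<alpha> i * \<alpha> i - \<kappa> * b i * b i)"
    using Oij Oim Ojm by (metis dvd_add dvd_mult dvd_minus_iff)
  hence d1: "P dvd \<alpha> i * \<alpha> i - \<kappa> * b i * b i"
    using defect_sol_facts(5) bn P_dvd_mult_iff by blast
  have "(\<alpha> i * \<alpha> i - \<kappa> * b i * b i) - ((\<alpha> i * \<alpha> i - \<alpha> i) - \<kappa> * (b i * b i - b i))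
      = \<alpha> i - \<kappa> * b i"
    by (simp add: algebra_simps)
  hence d2: "P dvd \<alpha> i - \<kappa> * b i" using d1 Di by (metis dvd_diff)
  have "\<alpha> i * \<alpha> i - \<kappa> * b i * b i
      = (\<alpha> i - \<kappa> * b i) * (\<alpha> i + \<kappa> * b i) + \<kappa> * (b i * b i) * (\<kappa> - 1)"
    by (simp add: algebra_simps)
  hence "P dvd \<kappa> * (b i * b i) * (\<kappa> - 1)" using d1 d2
    by (metis dvd_add_right_iff dvd_mult2)
  hence "P dvd \<kappa> - 1" using defect_sol_facts(5) bn P_dvd_mult_iff by blast
  hence k1: "\<kappa> = 1" using residue_one_if_dvd kappa_unit by auto
  hence "P dvd \<alpha> i - b i" using d2 by simp
  thus ?thesis using k1 residue_eq_if_dvd defect_sol_facts(1,2) by blast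
qed

lemma defect_sol_eq_if_three_support:
  assumes "i \<noteq> j" "i \<noteq> m" "j \<noteq> m" "b i \<noteq> 0" "b j \<noteq> 0" "b m \<noteq> 0"
  shows "\<alpha> = b \<and> \<kappa> = 1"
proof -
  have inR: "s \<in> R" if "b s \<noteq> 0" for s using defect_sol_facts(4) S_subset_R that by blast
  have nonzero: "\<alpha> s = b s \<and> \<kappa> = 1" if "b s \<noteq> 0" for s
  proof -
    obtain x y where "x \<noteq> s" "y \<noteq> s" "x \<noteq> y" "b x \<noteq> 0" "b y \<noteq> 0"
      using assms by metis
    thus ?thesis using defect_sol_three_support inR that by metis
  qed
  have "\<alpha> s = b s" for s
  proof (cases "b s = 0")
    case True
    hence "s \<noteq> i" using assms(4) by auto
    thus ?thesis using True defect_sol_alpha_zero[of s i] nonzero[OF assms(4)] inR assms(4) by simp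
  qed (use nonzero in blast)
  thus ?thesis using nonzero[OF assms(4)] by blast
qed

lemma defect_sol_two_support:
  assumes ij: "i \<in> S" "j \<in> S" "i < j" and nz: "b i \<noteq> 0" "b j \<noteq> 0"
    and others: "\<forall>m. m \<noteq> i \<longrightarrow> m \<noteq> j \<longrightarrow> b m = 0"
  shows "(\<kappa>, \<alpha>, b) \<in> ds_diag \<union> ds_b_twin"
proof -
  have ijR: "i \<in> R" "j \<in> R" using ij S_subset_R by auto
  have E1: "P dvd (\<alpha> i * \<alpha> i - \<alpha> i) - \<kappa> * (b i * b i - b i)"
    and E2: "P dvd (\<alpha> j * \<alpha> j - \<alpha> j) - \<kappa> * (b j * b j - b j)"
    and E3: "P dvd \<alpha> i * \<alpha> j - \<kappa> * (b i * b j)"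
    using cong ijR ij(3) by (metis idem_defect_diag idem_defect_off_diag less_irrefl)+
  have alpha_i: "\<alpha> i \<noteq> 0"
    using E3 nz defect_sol_facts(2,5) not_dvd_nonzero_residue P_dvd_mult_iff by fastforce
  have alpha_others: "\<alpha> m = 0" if "m \<noteq> i" "m \<noteq> j" for m
    using defect_sol_alpha_zero[of m i] that ijR alpha_i others by simp
  from two_coords_cases[OF defect_sol_facts(1,1,2,2) kappa_unit nz E1 E2 E3]
  show ?thesis
  proof
    assume "\<alpha> i = b i \<and> \<alpha> j = b j \<and> \<kappa> = 1"
    hence "\<alpha> = b" using alpha_others others by (metis ext)
    thus ?thesis
      using \<open>\<alpha> i = b i \<and> \<alpha> j = b j \<and> \<kappa> = 1\<close> b_vec
      by (auto simp: ds_diag_def)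
  next
    assume h: "\<alpha> i \<noteq> b i \<and> b i + b j = P + 1 \<and> \<alpha> i + \<alpha> j = P + 1"
    have "\<alpha> = twin_vec P (\<alpha> i) i j" "b = twin_vec P (b i) i j"
      using h alpha_others others ij(3) by (auto simp: pair_vec_def fun_eq_iff)
    moreover have "b i \<in> {2..<P}" "\<alpha> i \<in> {2..<P}"
      using h defect_sol_facts(1,2)[of j] defect_sol_facts(1,2)[of i] by auto
    moreover have "P dvd (b i * b i - b i) * \<kappa> - (\<alpha> i * \<alpha> i - \<alpha> i)"
      using E1 by (metis dvd_minus_iff minus_diff_eq mult.commute)
    ultimately show ?thesis using h ij kappa_unit unfolding ds_b_twin_def by blast
  qed
qed

lemma defect_sol_one_support:
  assumes j: "j \<in> S" and nz: "b j \<noteq> 0" and others: "\<forall>m. m \<noteq> j \<longrightarrow> b m = 0"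
  shows "(\<kappa>, \<alpha>, b) \<in> ds_diag \<union> ds_b_basis \<union> ds_b_single"
proof -
  have jR: "j \<in> R" using j S_subset_R by blast
  have b_eq: "b = single_vec (b j) j" using others by (auto simp: single_vec_def fun_eq_iff)
  have Dj: "P dvd (\<alpha> j * \<alpha> j - \<alpha> j) - \<kappa> * (b j * b j - b j)"
    using cong jR by (metis idem_defect_diag)
  show ?thesis
  proof (cases "b j = 1")
    case True
    have "\<forall>i\<in>R. \<forall>m\<in>R. P dvd idem_defect \<alpha> i m"
      using cong b_eq True idem_defect_zero_or_basis[of "basis_vec j" S] j
      by (auto simp: zero_or_basis_def)
    hence "\<alpha> \<in> zero_or_basis R" using zero_or_basis_if_idem_mod alpha_vec by blast
    thus ?thesis using b_eq True b_vec j kappa_unit by (auto simp: ds_diag_def ds_b_basis_def)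
  next
    case False
    define c where "c = b j"
    have cP: "c \<in> {2..<P}" using False nz defect_sol_facts(2)[of j] by (auto simp: c_def)
    have "\<not> P dvd \<kappa> * (c * c - c)"
      using not_dvd_idem_defect[OF cP] defect_sol_facts(5) P_dvd_mult_iff by blast
    hence vP: "\<alpha> j \<in> {2..<P}"
      using Dj defect_sol_facts(1)[of j] unfolding c_def[symmetric]
      by (cases "\<alpha> j = 0 \<or> \<alpha> j = 1") (auto simp: dvd_minus_iff)
    have "\<alpha> m = 0" if "m \<noteq> j" for m
      using defect_sol_alpha_zero[of m j] that jR vP others by simp
    hence a_eq: "\<alpha> = single_vec (\<alpha> j) j" by (auto simp: single_vec_def fun_eq_iff)
    have dd: "P dvd (c * c - c) * \<kappa> - (\<alpha> j * \<alpha> j - \<alpha> j)"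
      using Dj unfolding c_def by (metis dvd_minus_iff minus_diff_eq mult.commute)
    show ?thesis
    proof (cases "\<alpha> j = c")
      case True
      hence "P dvd (c * c - c) * (\<kappa> - 1)" using dd by (simp add: algebra_simps)
      hence "P dvd \<kappa> - 1" using not_dvd_idem_defect[OF cP] P_dvd_mult_iff by blast
      hence "\<kappa> = 1" using residue_one_if_dvd kappa_unit by auto
      thus ?thesis using a_eq b_eq True b_vec unfolding c_def by (auto simp: ds_diag_def)
    next
      case False
      thus ?thesis using a_eq b_eq cP vP kappa_unit j dd unfolding c_def
        by (auto simp: ds_b_single_def)
    qed
  qed
qed

end

lemma defect_sols_subset:
  "defect_sols \<subseteq> ds_kappa0 \<union> ds_diag \<union> ds_b_zero \<union> ds_b_basis \<union> ds_b_single \<union> ds_b_twin"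
proof
  fix z assume "z \<in> defect_sols"
  then obtain \<kappa> \<alpha> b where z: "z = (\<kappa>, \<alpha>, b)" and kP: "\<kappa> \<in> Pr" and ae: "\<alpha> \<in> vecs_on R Pr"
    and be: "b \<in> vecs_on S Pr" and H: "\<forall>i\<in>R. \<forall>j\<in>R. P dvd idem_defect \<alpha> i j - \<kappa> * idem_defect b i j"
    by (auto simp: defect_sols_def)
  have bS: "b s \<noteq> 0 \<Longrightarrow> s \<in> S" for s using be by (auto simp: vecs_on_def)
  show "z \<in> ds_kappa0 \<union> ds_diag \<union> ds_b_zero \<union> ds_b_basis \<union> ds_b_single \<union> ds_b_twin"
  proof (cases "\<kappa> = 0 \<or> b = (\<lambda>_. 0)")
    case True
    hence zero: "\<kappa> * idem_defect b i j = 0" for i j by (auto simp: idem_defect_def)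
    have "\<forall>i\<in>R. \<forall>j\<in>R. P dvd idem_defect \<alpha> i j"
    proof (intro ballI)
      fix i j assume "i \<in> R" "j \<in> R"
      hence "P dvd idem_defect \<alpha> i j - \<kappa> * idem_defect b i j" using H by blast
      thus "P dvd idem_defect \<alpha> i j" unfolding zero by simp
    qed
    hence "\<alpha> \<in> zero_or_basis R" using zero_or_basis_if_idem_mod ae by blast
    thus ?thesis using True kP be by (auto simp: z ds_kappa0_def ds_diag_def ds_b_zero_def)
  next
    case False
    hence k: "\<kappa> \<in> {1..<P}" using kP by auto
    note sol = defect_sol_one_support[OF H ae be k] defect_sol_two_support[OF H ae be k]
      defect_sol_eq_if_three_support[OF H ae be k]
    obtain j where bj: "b j \<noteq> 0" using False by auto
    show ?thesis
    proof (cases "\<exists>i. i \<noteq> j \<and> b i \<noteq> 0")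
      case False
      thus ?thesis using sol(1)[OF bS[OF bj] bj] by (auto simp: z)
    next
      case True
      then obtain i where ij: "i \<noteq> j" and bi: "b i \<noteq> 0" by blast
      show ?thesis
      proof (cases "\<exists>m. m \<noteq> i \<and> m \<noteq> j \<and> b m \<noteq> 0")
        case True
        then obtain m where m: "m \<noteq> i" "m \<noteq> j" "b m \<noteq> 0" by blast
        have "\<alpha> = b \<and> \<kappa> = 1"
          using sol(3)[OF ij m(1)[symmetric] m(2)[symmetric] bi bj m(3)] .
        thus ?thesis using be by (auto simp: z ds_diag_def)
      next
        case False
        hence "\<forall>m. m \<noteq> min i j \<longrightarrow> m \<noteq> max i j \<longrightarrow> b m = 0"
          by (auto simp: min_def max_def)
        moreover have "min i j < max i j" "b (min i j) \<noteq> 0" "b (max i j) \<noteq> 0"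
          using ij bi bj by (auto simp: min_def max_def)
        ultimately show ?thesis using sol(2)[OF bS bS] z by blast
      qed
    qed
  qed
qed

lemma vecs_on_S_in_R: "f \<in> vecs_on S Pr \<Longrightarrow> f \<in> vecs_on R Pr"
  using S_subset_R P_gt_1 by (auto simp: vecs_on_def)

lemma single_vec_in_vecs_on: "j \<in> I \<Longrightarrow> v \<in> Pr \<Longrightarrow> single_vec v j \<in> vecs_on I Pr"
  using P_gt_1 by (auto simp: vecs_on_def single_vec_def)

lemma basis_vec_in_vecs_on: "j \<in> I \<Longrightarrow> basis_vec j \<in> vecs_on I Pr"
  using P_gt_1 by (auto simp: vecs_on_def single_vec_def)

lemma twin_vec_in_vecs_on: "i \<in> I \<Longrightarrow> j \<in> I \<Longrightarrow> i \<noteq> j \<Longrightarrow> v \<in> {2..<P} \<Longrightarrow> twin_vec P v i j \<in> vecs_on I Pr"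
  using P_gt_1 by (auto simp: vecs_on_def pair_vec_def)

lemma idem_defect_single_vec: "idem_defect (single_vec v j) s t
    = (if s = j \<and> t = j then v * v - v else 0)"
  by (auto simp: idem_defect_def single_vec_def)

lemma twin_diag_cong: "P dvd ((P + 1 - v) * (P + 1 - v) - (P + 1 - v)) - (v * v - v)"
proof -
  have "((P + 1 - v) * (P + 1 - v) - (P + 1 - v)) - (v * v - v) = P * (P - 2 * v + 1)"
    by (simp add: algebra_simps)
  thus ?thesis by simp
qed

lemma twin_cross_cong: "P dvd v * (P + 1 - v) + (v * v - v)"
proof -
  have "v * (P + 1 - v) + (v * v - v) = P * v" by (simp add: algebra_simps)
  thus ?thesis by simp
qed

lemma ds_b_twin_subset: "ds_b_twin \<subseteq> defect_sols"
proof
  fix z assume "z \<in> ds_b_twin"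
  then obtain \<kappa> v c i j where z: "z = (\<kappa>, twin_vec P v i j, twin_vec P c i j)"
    and ij: "i \<in> S" "j \<in> S" "i < j" and c: "c \<in> {2..<P}"
    and v: "v \<in> {2..<P}"
    and k: "\<kappa> \<in> {1..<P}" and d: "P dvd (c * c - c) * \<kappa> - (v * v - v)"
      by (auto simp: ds_b_twin_def)
  have d': "P dvd (v * v - v) - \<kappa> * (c * c - c)" using d
    by (metis dvd_minus_iff minus_diff_eq mult.commute)
  define v' where "v' = P + 1 - v"
  define c' where "c' = P + 1 - c"
  have X: "P dvd (v' * v' - v') - (v * v - v)" using twin_diag_cong[of v] unfolding v'_def .
  have Y: "P dvd (c' * c' - c') - (c * c - c)" using twin_diag_cong[of c] unfolding c'_def .
  have X2: "P dvd v * v' + (v * v - v)" using twin_cross_cong[of v] unfolding v'_def .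
  have Y2: "P dvd c * c' + (c * c - c)" using twin_cross_cong[of c] unfolding c'_def .
  have jj: "P dvd (v' * v' - v') - \<kappa> * (c' * c' - c')"
  proof -
    have e: "(v' * v' - v') - \<kappa> * (c' * c' - c') = ((v' * v' - v') - (v * v - v)) - \<kappa>
        * ((c' * c' - c') - (c * c - c))
       + ((v * v - v) - \<kappa> * (c * c - c))" by (simp add: algebra_simps)
    show ?thesis unfolding e by (intro dvd_add dvd_diff dvd_mult X Y d')
  qed
  have ij2: "P dvd v * v' - \<kappa> * (c * c')"
  proof -
    have e: "v * v' - \<kappa> * (c * c') = (v * v' + (v * v - v)) - \<kappa> * (c * c' + (c * c - c))
        - ((v * v - v) - \<kappa> * (c * c - c))"
      by (simp add: algebra_simps)
    show ?thesis unfolding e by (intro dvd_add dvd_diff dvd_mult X2 Y2 d')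
  qed
  have ij3: "P dvd v' * v - \<kappa> * (c' * c)" using ij2 by (simp add: mult.commute)
  have "P dvd idem_defect (twin_vec P v i j) s t - \<kappa> * idem_defect (twin_vec P c i j) s t" for s t
    using ij d' jj ij2 ij3 unfolding v'_def c'_def by (auto simp: idem_defect_def pair_vec_def)
  hence "\<forall>s\<in>R. \<forall>t\<in>R. P dvd idem_defect (twin_vec P v i j) s t - \<kappa>
      * idem_defect (twin_vec P c i j) s t"
    by blast
  thus "z \<in> defect_sols"
    using twin_vec_in_vecs_on[of i R j v] twin_vec_in_vecs_on[of i S j c] ij S_subset_R c v k
    by (auto simp: z defect_sols_def)
qed

lemma defect_sols_supset: "ds_kappa0 \<union> ds_diag \<union> ds_b_zero \<union> ds_b_basis \<union> ds_b_single \<union> ds_b_twin \<subseteq> defect_sols"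
proof -
  have k0: "0 \<in> Pr" "1 \<in> Pr" using P_gt_1 by auto
  have "ds_kappa0 \<subseteq> defect_sols"
    using idem_defect_zero_or_basis zero_or_basis_in_vecs_on k0
    by (auto simp: ds_kappa0_def defect_sols_def)
  moreover have "ds_diag \<subseteq> defect_sols" using vecs_on_S_in_R k0
    by (auto simp: ds_diag_def defect_sols_def)
  moreover have "ds_b_zero \<subseteq> defect_sols"
    using idem_defect_zero_or_basis zero_or_basis_in_vecs_on
    by (auto simp: ds_b_zero_def defect_sols_def vecs_on_def idem_defect_def)
  moreover have "ds_b_basis \<subseteq> defect_sols"
  proof
    fix z assume "z \<in> ds_b_basis"
    then obtain \<kappa> \<alpha> j where z: "z = (\<kappa>, \<alpha>, basis_vec j)" and j: "j \<in> S" and k: "\<kappa> \<in> {1..<P}"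
      and a: "\<alpha> \<in> zero_or_basis R"
      by (auto simp: ds_b_basis_def)
    have "basis_vec j \<in> zero_or_basis S" using j by (simp add: zero_or_basis_def)
    thus "z \<in> defect_sols"
      using idem_defect_zero_or_basis[OF a] idem_defect_zero_or_basis[of "basis_vec j" S] zero_or_basis_in_vecs_on[OF a] basis_vec_in_vecs_on[OF j] k
      by (auto simp: z defect_sols_def)
  qed
  moreover have "ds_b_single \<subseteq> defect_sols"
  proof
    fix z assume "z \<in> ds_b_single"
    then obtain \<kappa> v c j where z: "z = (\<kappa>, single_vec v j, single_vec c j)" and j: "j \<in> S"
      and c: "c \<in> {2..<P}" and v: "v \<in> {2..<P}"
      and k: "\<kappa> \<in> {1..<P}" and d: "P dvd (c * c - c) * \<kappa> - (v * v - v)"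
        by (auto simp: ds_b_single_def)
    have d': "P dvd (v * v - v) - \<kappa> * (c * c - c)" using d
      by (metis dvd_minus_iff minus_diff_eq mult.commute)
    have "\<forall>s\<in>R. \<forall>t\<in>R. P dvd idem_defect (single_vec v j) s t - \<kappa> * idem_defect (single_vec c j) s t"
      using d' by (auto simp: idem_defect_single_vec)
    thus "z \<in> defect_sols"
      using single_vec_in_vecs_on[of j R v] single_vec_in_vecs_on[of j S c] j S_subset_R c v k
      by (auto simp: z defect_sols_def)
  qed
  moreover have "ds_b_twin \<subseteq> defect_sols" by (rule ds_b_twin_subset)
  ultimately show ?thesis by blast
qed

lemma defect_sols_eq: "defect_sols
    = ds_kappa0 \<union> ds_diag \<union> ds_b_zero \<union> ds_b_basis \<union> ds_b_single \<union> ds_b_twin"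
  using defect_sols_subset defect_sols_supset by blast

lemma nat_P_minus_2: "nat (P - 2) = p - 2" using P_gt_1 by linarith
lemma nat_P_minus_1: "nat (P - 1) = p - 1" using P_gt_1 by linarith
lemma card_2_to_P: "card {2..<P} = p - 2" using nat_P_minus_2 by simp
lemma card_1_to_P: "card {1..<P} = p - 1" using nat_P_minus_1 by simp
lemma card_ds_kappa0: "card ds_kappa0 = (card R + 1) * p ^ card S"
proof -
  have eq: "ds_kappa0 = (\<lambda>(\<alpha>, b). (0::int, \<alpha>, b)) ` (zero_or_basis R \<times> vecs_on S Pr)"
    by (auto simp: ds_kappa0_def)
  have inj: "inj_on (\<lambda>(\<alpha>, b). (0::int, \<alpha>, b)) (zero_or_basis R \<times> vecs_on S Pr)"
    by (auto simp: inj_on_def)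
  have "card ds_kappa0 = card (zero_or_basis R \<times> vecs_on S Pr)"
    by (subst eq) (rule card_image[OF inj])
  thus ?thesis using finite_R finite_S
    by (simp add: card_cartesian_product card_zero_or_basis card_vecs_on)
qed

lemma card_ds_diag: "card ds_diag = p ^ card S"
proof -
  have eq: "ds_diag = (\<lambda>b. (1::int, b, b)) ` (vecs_on S Pr)" by (auto simp: ds_diag_def)
  have inj: "inj_on (\<lambda>b. (1::int, b, b)) (vecs_on S Pr)" by (auto simp: inj_on_def)
  have "card ds_diag = card (vecs_on S Pr)" by (subst eq) (rule card_image[OF inj])
  thus ?thesis using finite_S by (simp add: card_vecs_on)
qed

lemma card_ds_b_zero: "card ds_b_zero = (p - 1) * (card R + 1) - 1"
proof -
  have eq: "ds_b_zero
      = (\<lambda>(\<kappa>, \<alpha>). (\<kappa>, \<alpha>, \<lambda>_::nat. 0::int)) ` ({1..<P} \<times> zero_or_basis R - {(1, \<lambda>_. 0)})"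
    by (auto simp: ds_b_zero_def)
  have inj: "inj_on (\<lambda>(\<kappa>, \<alpha>). (\<kappa>, \<alpha>, \<lambda>_::nat. 0::int)) ({1..<P} \<times> zero_or_basis R - {(1, \<lambda>_. 0)})"
    by (auto simp: inj_on_def)
  have "card ds_b_zero = card ({1..<P} \<times> zero_or_basis R - {(1, \<lambda>_. 0)})"
    by (subst eq) (rule card_image[OF inj])
  also have "\<dots> = card ({1..<P} \<times> zero_or_basis R) - 1"
    using P_gt_1 finite_zero_or_basis[OF finite_R]
    by (subst card_Diff_singleton) (auto simp: zero_or_basis_def)
  also have "card ({1..<P} \<times> zero_or_basis R) = (p - 1) * (card R + 1)" using finite_R
    by (simp only: card_cartesian_product card_zero_or_basis card_1_to_P)
  finally show ?thesis .
qed

lemma card_ds_b_basis: "card ds_b_basis = card S * ((p - 1) * (card R + 1) - 1)"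
proof -
  define Dom where "Dom = Sigma S (\<lambda>j. {1..<P} \<times> zero_or_basis R - {(1, basis_vec j)})"
  have eq: "ds_b_basis = (\<lambda>(j, \<kappa>, \<alpha>). (\<kappa>, \<alpha>, basis_vec j)) ` Dom"
  proof
    show "ds_b_basis \<subseteq> (\<lambda>(j, \<kappa>, \<alpha>). (\<kappa>, \<alpha>, basis_vec j)) ` Dom"
    proof
      fix z assume "z \<in> ds_b_basis"
      then obtain \<kappa> \<alpha> j where z: "z = (\<kappa>, \<alpha>, basis_vec j)"
        and h: "j \<in> S" "\<kappa> \<in> {1..<P}" "\<alpha> \<in> zero_or_basis R" "\<not> (\<kappa> = 1 \<and> \<alpha> = basis_vec j)"
        by (auto simp: ds_b_basis_def)
      show "z \<in> (\<lambda>(j, \<kappa>, \<alpha>). (\<kappa>, \<alpha>, basis_vec j)) ` Dom"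
        by (rule image_eqI[where x = "(j, \<kappa>, \<alpha>)"]) (use z h in \<open>auto simp: Dom_def\<close>)
    qed
    show "(\<lambda>(j, \<kappa>, \<alpha>). (\<kappa>, \<alpha>, basis_vec j)) ` Dom \<subseteq> ds_b_basis"
      by (auto simp: ds_b_basis_def Dom_def)
  qed
  have inj: "inj_on (\<lambda>(j, \<kappa>, \<alpha>). (\<kappa>, \<alpha>, basis_vec j)) Dom"
    by (auto simp: inj_on_def basis_vec_eq_iff)
  have "card ds_b_basis = card Dom" by (subst eq) (rule card_image[OF inj])
  also have "\<dots> = (\<Sum>j\<in>S. card ({1..<P} \<times> zero_or_basis R - {(1, basis_vec j)}))"
    unfolding Dom_def
    using finite_S finite_zero_or_basis[OF finite_R] by (subst card_SigmaI) auto
  also have "\<dots> = (\<Sum>j\<in>S. (p - 1) * (card R + 1) - 1)"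
  proof (rule sum.cong)
    fix j assume j: "j \<in> S"
    have "card ({1..<P} \<times> zero_or_basis R - {(1, basis_vec j)}) = card ({1..<P} \<times> zero_or_basis R) - 1"
      using P_gt_1 finite_zero_or_basis[OF finite_R] j S_subset_R
      by (subst card_Diff_singleton) (auto simp: zero_or_basis_def)
    also have "card ({1..<P} \<times> zero_or_basis R) = (p - 1) * (card R + 1)" using finite_R
      by (simp only: card_cartesian_product card_zero_or_basis card_1_to_P)
    finally show "card ({1..<P} \<times> zero_or_basis R - {(1, basis_vec j)}) = (p - 1) * (card R + 1) - 1" .
  qed simp
  finally show ?thesis by simp
qed

definition "distinct_pairs_2P = {(c, v). c \<in> {2..<P} \<and> v \<in> {2..<P} \<and> v \<noteq> c}"

lemma card_distinct_pairs_2P: "card distinct_pairs_2P = (p - 2) * (p - 3)"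
proof -
  have "distinct_pairs_2P = Sigma {2..<P} (\<lambda>c. {2..<P} - {c})"
    by (auto simp: distinct_pairs_2P_def)
  hence "card distinct_pairs_2P = (\<Sum>c\<in>{2..<P}. card ({2..<P} - {c}))"
    by (simp add: card_SigmaI)
  also have "\<dots> = (\<Sum>c\<in>{2..<P}. p - 3)"
    by (rule sum.cong) (auto simp: card_Diff_singleton card_2_to_P)
  finally show ?thesis using card_2_to_P by (simp add: mult.commute)
qed

lemma finite_distinct_pairs_2P: "finite distinct_pairs_2P" unfolding distinct_pairs_2P_def
  by (rule finite_subset[of _ "{2..<P} \<times> {2..<P}"]) auto

lemma card_ds_b_single: "card ds_b_single = card S * ((p - 2) * (p - 3))"
proof -
  define X where "X = S \<times> distinct_pairs_2P"
  define Y where "Y = {(x, t). x \<in> X \<and> t \<in> {1..<P} \<and> P dvd (fst (snd x) * fst (snd x) - fst (snd x)) * t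
      - (snd (snd x) * snd (snd x) - snd (snd x))}"
  have eq: "ds_b_single = (\<lambda>((j, c, v), \<kappa>). (\<kappa>, single_vec v j, single_vec c j)) ` Y"
    by (auto simp: ds_b_single_def Y_def X_def distinct_pairs_2P_def image_iff) blast+
  have inj: "inj_on (\<lambda>((j, c, v), \<kappa>). (\<kappa>, single_vec v j, single_vec c j)) Y"
  proof (rule inj_onI, clarsimp)
    fix j c v \<kappa> j' c' v' \<kappa>'
    assume h: "((j, c, v), \<kappa>) \<in> Y" "((j', c', v'), \<kappa>') \<in> Y" "single_vec v j
        = single_vec v' j'" "single_vec c j = single_vec c' j'"
    have c0: "c \<noteq> 0" using h(1) by (auto simp: Y_def X_def distinct_pairs_2P_def)
    have "single_vec c j j = single_vec c' j' j" using h(4) by simp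
    hence jj: "j = j'" using c0 by (auto simp: single_vec_def split: if_splits)
    have "c = c'" using h(4) jj by (metis single_vec_def)
    moreover have "v = v'" using h(3) jj by (metis single_vec_def)
    ultimately show "j = j' \<and> c = c' \<and> v = v'" using jj by simp
  qed
  have "card ds_b_single = card Y" by (subst eq) (rule card_image[OF inj])
  also have "\<dots> = card X" unfolding Y_def
  proof (rule card_linear_cong_family_nonzero)
    show "finite X" using finite_S finite_distinct_pairs_2P by (simp add: X_def)
    fix x assume "x \<in> X"
    hence "fst (snd x) \<in> {2..<P}" "snd (snd x) \<in> {2..<P}"
      by (auto simp: X_def distinct_pairs_2P_def)
    thus "\<not> P dvd fst (snd x) * fst (snd x) - fst (snd x)" "\<not> P dvd snd (snd x) * snd (snd x) - snd (snd x)"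
      using not_dvd_idem_defect by auto
  qed
  also have "\<dots> = card S * ((p - 2) * (p - 3))"
    by (simp add: X_def card_cartesian_product card_distinct_pairs_2P)
  finally show ?thesis .
qed

definition "ascending_pairs = {(i, j). i \<in> S \<and> j \<in> S \<and> i < j}"

lemma card_ascending_pairs: "card ascending_pairs = card S choose 2"
proof -
  have "bij_betw (\<lambda>(i, j). {i, j}) ascending_pairs {B. B \<subseteq> S \<and> card B = 2}"
  proof (rule bij_betw_imageI)
    show "inj_on (\<lambda>(i, j). {i, j}) ascending_pairs"
      by (auto simp: inj_on_def ascending_pairs_def doubleton_eq_iff)
    show "(\<lambda>(i, j). {i, j}) ` ascending_pairs = {B. B \<subseteq> S \<and> card B = 2}"
    proof
      show "(\<lambda>(i, j). {i, j}) ` ascending_pairs \<subseteq> {B. B \<subseteq> S \<and> card B = 2}"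
        by (auto simp: ascending_pairs_def)
      show "{B. B \<subseteq> S \<and> card B = 2} \<subseteq> (\<lambda>(i, j). {i, j}) ` ascending_pairs"
      proof
        fix B assume "B \<in> {B. B \<subseteq> S \<and> card B = 2}"
        then obtain x y where B: "B = {x, y}" "x \<noteq> y" "B \<subseteq> S"
          by (auto simp: card_2_iff)
        show "B \<in> (\<lambda>(i, j). {i, j}) ` ascending_pairs"
        proof (cases "x < y")
          case True thus ?thesis using B
            by (auto simp: ascending_pairs_def image_iff intro!: bexI[where x = "(x, y)"])
        next
          case False hence "y < x" using B by auto
          thus ?thesis using B
            by (auto simp: ascending_pairs_def image_iff intro!: bexI[where x = "(y, x)"])
        qed
      qed
    qed
  qed
  hence "card ascending_pairs = card {B. B \<subseteq> S \<and> card B = 2}"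
    by (rule bij_betw_same_card)
  thus ?thesis using finite_S by (simp add: n_subsets)
qed

lemma finite_ascending_pairs: "finite ascending_pairs"
proof -
  have "ascending_pairs \<subseteq> S \<times> S" by (auto simp: ascending_pairs_def)
  thus ?thesis using finite_S finite_subset by blast
qed

lemma twin_vec_nonzero_iff: "c \<in> {2..<P} \<Longrightarrow> i \<noteq> j \<Longrightarrow> twin_vec P c i j s \<noteq> 0 \<longleftrightarrow> s = i \<or> s = j"
  by (auto simp: pair_vec_def)

lemma twin_vec_support: "c \<in> {2..<P} \<Longrightarrow> i \<noteq> j \<Longrightarrow> {s. twin_vec P c i j s \<noteq> 0} = {i, j}"
  using twin_vec_nonzero_iff by blast

lemma card_ds_b_twin: "card ds_b_twin = (card S choose 2) * ((p - 2) * (p - 3))"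
proof -
  define X where "X = ascending_pairs \<times> distinct_pairs_2P"
  define Y where "Y = {(x, t). x \<in> X \<and> t \<in> {1..<P} \<and> P dvd (fst (snd x) * fst (snd x) - fst (snd x)) * t
      - (snd (snd x) * snd (snd x) - snd (snd x))}"
  have eq: "ds_b_twin = (\<lambda>(((i, j), c, v), \<kappa>). (\<kappa>, twin_vec P v i j, twin_vec P c i j)) ` Y"
  proof
    show "ds_b_twin \<subseteq> (\<lambda>(((i, j), c, v), \<kappa>). (\<kappa>, twin_vec P v i j, twin_vec P c i j)) ` Y"
    proof
      fix z assume "z \<in> ds_b_twin"
      then obtain \<kappa> v c i j where z: "z = (\<kappa>, twin_vec P v i j, twin_vec P c i j)"
        and h: "i \<in> S" "j \<in> S" "i < j" "c \<in> {2..<P}" "v \<in> {2..<P}" "v \<noteq> c"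
        "\<kappa> \<in> {1..<P}" "P dvd (c * c - c) * \<kappa> - (v * v - v)"
          unfolding ds_b_twin_def by blast
      show "z \<in> (\<lambda>(((i, j), c, v), \<kappa>). (\<kappa>, twin_vec P v i j, twin_vec P c i j)) ` Y"
        by (rule image_eqI[where x = "(((i, j), c, v), \<kappa>)"]) (use z h in \<open>auto simp: Y_def X_def ascending_pairs_def distinct_pairs_2P_def\<close>)
    qed
    show "(\<lambda>(((i, j), c, v), \<kappa>). (\<kappa>, twin_vec P v i j, twin_vec P c i j)) ` Y \<subseteq> ds_b_twin"
      unfolding ds_b_twin_def Y_def X_def ascending_pairs_def distinct_pairs_2P_def by fastforce
  qed
  have inj: "inj_on (\<lambda>(((i, j), c, v), \<kappa>). (\<kappa>, twin_vec P v i j, twin_vec P c i j)) Y"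
  proof (rule inj_onI, clarsimp)
    fix i j c v \<kappa> i' j' c' v' \<kappa>'
    assume h: "(((i, j), c, v), \<kappa>) \<in> Y" "(((i', j'), c', v'), \<kappa>') \<in> Y" "twin_vec P v i j
        = twin_vec P v' i' j'" "twin_vec P c i j = twin_vec P c' i' j'"
    have r: "i < j" "i' < j'" "c \<in> {2..<P}" "c' \<in> {2..<P}" using h(1,2)
      by (auto simp: Y_def X_def ascending_pairs_def distinct_pairs_2P_def)
    have "{i, j} = {i', j'}" using twin_vec_support[of c i j] twin_vec_support[of c' i' j'] r h(4)
      by auto
    hence ij: "i = i'" "j = j'" using r by (auto simp: doubleton_eq_iff)
    have "c = c'" using fun_cong[OF h(4), of i] ij by (simp add: pair_vec_def)
    moreover have "v = v'" using fun_cong[OF h(3), of i] ij by (simp add: pair_vec_def)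
    ultimately show "i = i' \<and> j = j' \<and> c = c' \<and> v = v'" using ij by simp
  qed
  have "card ds_b_twin = card Y" by (subst eq) (rule card_image[OF inj])
  also have "\<dots> = card X" unfolding Y_def
  proof (rule card_linear_cong_family_nonzero)
    show "finite X" using finite_ascending_pairs finite_distinct_pairs_2P by (simp add: X_def)
    fix x assume "x \<in> X"
    hence "fst (snd x) \<in> {2..<P}" "snd (snd x) \<in> {2..<P}"
      by (auto simp: X_def distinct_pairs_2P_def)
    thus "\<not> P dvd fst (snd x) * fst (snd x) - fst (snd x)" "\<not> P dvd snd (snd x) * snd (snd x) - snd (snd x)"
      using not_dvd_idem_defect by auto
  qed
  also have "\<dots> = (card S choose 2) * ((p - 2) * (p - 3))"
    by (simp add: X_def card_cartesian_product card_distinct_pairs_2P card_ascending_pairs)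
  finally show ?thesis .
qed

lemma finite_defect_sols: "finite defect_sols"
proof -
  have "defect_sols \<subseteq> Pr \<times> vecs_on R Pr \<times> vecs_on S Pr"
    by (auto simp: defect_sols_def)
  moreover have "finite (Pr \<times> vecs_on R Pr \<times> vecs_on S Pr)"
    using finite_R finite_S finite_vecs_on by auto
  ultimately show ?thesis using finite_subset by blast
qed

lemma ds_shapes:
  "z \<in> ds_kappa0 \<Longrightarrow> fst z = 0"
  "z \<in> ds_diag \<Longrightarrow> fst z = 1 \<and> fst (snd z) = snd (snd z)"
  "z \<in> ds_b_zero \<Longrightarrow> fst z \<ge> 1 \<and> \<not> (fst z = 1 \<and> fst (snd z) = snd (snd z)) \<and> snd (snd z) = (\<lambda>_. 0)"
  "z \<in> ds_b_basis \<Longrightarrow> fst z \<ge> 1 \<and> \<not> (fst z = 1 \<and> fst (snd z) = snd (snd z))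
      \<and> (\<exists>j. snd (snd z) = basis_vec j)"
  "z \<in> ds_b_single \<Longrightarrow> fst z \<ge> 1 \<and> \<not> (fst z = 1 \<and> fst (snd z) = snd (snd z))
      \<and> (\<exists>j c. c \<in> {2..<P} \<and> snd (snd z) = single_vec c j)"
  "z \<in> ds_b_twin \<Longrightarrow> fst z \<ge> 1 \<and> \<not> (fst z = 1 \<and> fst (snd z) = snd (snd z))
      \<and> (\<exists>i j c. i < j \<and> c \<in> {2..<P} \<and> snd (snd z) = twin_vec P c i j)"
proof -
  show "z \<in> ds_kappa0 \<Longrightarrow> fst z = 0" by (auto simp: ds_kappa0_def)
  show "z \<in> ds_diag \<Longrightarrow> fst z = 1 \<and> fst (snd z) = snd (snd z)"
    by (auto simp: ds_diag_def)
  show "z \<in> ds_b_zero \<Longrightarrow> fst z \<ge> 1 \<and> \<not> (fst z = 1 \<and> fst (snd z) = snd (snd z)) \<and> snd (snd z)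
      = (\<lambda>_. 0)"
    by (auto simp: ds_b_zero_def)
  show "z \<in> ds_b_basis \<Longrightarrow> fst z \<ge> 1 \<and> \<not> (fst z = 1 \<and> fst (snd z) = snd (snd z))
      \<and> (\<exists>j. snd (snd z) = basis_vec j)"
    by (auto simp: ds_b_basis_def)
  show "z \<in> ds_b_single \<Longrightarrow> fst z \<ge> 1 \<and> \<not> (fst z = 1 \<and> fst (snd z) = snd (snd z))
      \<and> (\<exists>j c. c \<in> {2..<P} \<and> snd (snd z) = single_vec c j)"
  proof -
    assume "z \<in> ds_b_single"
    then obtain \<kappa> v c j where z: "z = (\<kappa>, single_vec v j, single_vec c j)"
      and h: "c \<in> {2..<P}" "v \<noteq> c" "\<kappa> \<in> {1..<P}"
      unfolding ds_b_single_def by blast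
    have "single_vec v j j \<noteq> single_vec c j j" using h by (simp add: single_vec_def)
    hence "single_vec v j \<noteq> single_vec c j" by metis
    thus ?thesis using z h by auto
  qed
  show "z \<in> ds_b_twin \<Longrightarrow> fst z \<ge> 1 \<and> \<not> (fst z = 1 \<and> fst (snd z) = snd (snd z))
      \<and> (\<exists>i j c. i < j \<and> c \<in> {2..<P} \<and> snd (snd z) = twin_vec P c i j)"
  proof -
    assume "z \<in> ds_b_twin"
    then obtain \<kappa> v c i j where z: "z = (\<kappa>, twin_vec P v i j, twin_vec P c i j)"
      and h: "i < j" "c \<in> {2..<P}" "v \<noteq> c" "\<kappa> \<in> {1..<P}"
      unfolding ds_b_twin_def by blast
    have "twin_vec P v i j i \<noteq> twin_vec P c i j i" using h by (simp add: pair_vec_def)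
    hence "twin_vec P v i j \<noteq> twin_vec P c i j" by metis
    thus ?thesis using z h by auto
  qed
qed

lemma ds_vecs_distinct:
  "basis_vec j \<noteq> (\<lambda>_. 0)"
  "c \<in> {2..<P} \<Longrightarrow> single_vec c j \<noteq> (\<lambda>_. 0)"
  "c \<in> {2..<P} \<Longrightarrow> i < j \<Longrightarrow> twin_vec P c i j \<noteq> (\<lambda>_. 0)"
  "c \<in> {2..<P} \<Longrightarrow> basis_vec j' \<noteq> single_vec c j"
  "c \<in> {2..<P} \<Longrightarrow> i < j \<Longrightarrow> basis_vec j' \<noteq> twin_vec P c i j"
  "c \<in> {2..<P} \<Longrightarrow> c' \<in> {2..<P} \<Longrightarrow> i < j \<Longrightarrow> single_vec c' j' \<noteq> twin_vec P c i j"
proof -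
  show "basis_vec j \<noteq> (\<lambda>_. 0)" by (rule basis_vec_nonzero)
  show "c \<in> {2..<P} \<Longrightarrow> single_vec c j \<noteq> (\<lambda>_. 0)"
    by (auto simp: single_vec_def fun_eq_iff)
  show "c \<in> {2..<P} \<Longrightarrow> i < j \<Longrightarrow> twin_vec P c i j \<noteq> (\<lambda>_. 0)"
    by (auto simp: pair_vec_def fun_eq_iff intro!: exI[where x = i])
  show "c \<in> {2..<P} \<Longrightarrow> basis_vec j' \<noteq> single_vec c j"
  proof
    assume "c \<in> {2..<P}" "basis_vec j' = single_vec c j"
    hence "basis_vec j' j = c" by (simp add: single_vec_def)
    thus False using \<open>c \<in> {2..<P}\<close> by (auto simp: single_vec_def split: if_splits)
  qed
  show "c \<in> {2..<P} \<Longrightarrow> i < j \<Longrightarrow> basis_vec j' \<noteq> twin_vec P c i j"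
  proof
    assume "c \<in> {2..<P}" "i < j" "basis_vec j' = twin_vec P c i j"
    hence "basis_vec j' i = c" by (simp add: pair_vec_def)
    thus False using \<open>c \<in> {2..<P}\<close> by (auto simp: single_vec_def split: if_splits)
  qed
  show "c \<in> {2..<P} \<Longrightarrow> c' \<in> {2..<P} \<Longrightarrow> i < j \<Longrightarrow> single_vec c' j' \<noteq> twin_vec P c i j"
  proof
    assume h: "c \<in> {2..<P}" "c' \<in> {2..<P}" "i < j" "single_vec c' j' = twin_vec P c i j"
    have "twin_vec P c i j i \<noteq> 0" "twin_vec P c i j j \<noteq> 0"
      using twin_vec_nonzero_iff[of c i j] h by auto
    hence "single_vec c' j' i \<noteq> 0" "single_vec c' j' j \<noteq> 0" using h(4) by auto
    hence "i = j'" "j = j'" by (auto simp: single_vec_def split: if_splits)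
    thus False using h(3) by simp
  qed
qed

lemma ds_disjoint:
  "ds_kappa0 \<inter> ds_diag = {}" "ds_kappa0 \<inter> ds_b_zero = {}" "ds_kappa0 \<inter> ds_b_basis = {}"
  "ds_kappa0 \<inter> ds_b_single = {}" "ds_kappa0 \<inter> ds_b_twin = {}"
  "ds_diag \<inter> ds_b_zero = {}" "ds_diag \<inter> ds_b_basis = {}" "ds_diag \<inter> ds_b_single = {}"
  "ds_diag \<inter> ds_b_twin = {}"
  "ds_b_zero \<inter> ds_b_basis = {}" "ds_b_zero \<inter> ds_b_single = {}" "ds_b_zero \<inter> ds_b_twin = {}"
  "ds_b_basis \<inter> ds_b_single = {}" "ds_b_basis \<inter> ds_b_twin = {}" "ds_b_single \<inter> ds_b_twin = {}"
proof -
  note sh = ds_shapes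
  show "ds_kappa0 \<inter> ds_diag = {}" using sh(1,2) by fastforce
  show "ds_kappa0 \<inter> ds_b_zero = {}" using sh(1,3) by fastforce
  show "ds_kappa0 \<inter> ds_b_basis = {}" using sh(1,4) by fastforce
  show "ds_kappa0 \<inter> ds_b_single = {}" using sh(1,5) by fastforce
  show "ds_kappa0 \<inter> ds_b_twin = {}" using sh(1,6) by fastforce
  show "ds_diag \<inter> ds_b_zero = {}" using sh(2,3) by blast
  show "ds_diag \<inter> ds_b_basis = {}" using sh(2,4) by blast
  show "ds_diag \<inter> ds_b_single = {}" using sh(2,5) by blast
  show "ds_diag \<inter> ds_b_twin = {}" using sh(2,6) by blast
  show "ds_b_zero \<inter> ds_b_basis = {}" using sh(3,4) ds_vecs_distinct(1)
    by (metis disjoint_iff)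
  show "ds_b_zero \<inter> ds_b_single = {}" using sh(3,5) ds_vecs_distinct(2)
    by (metis disjoint_iff)
  show "ds_b_zero \<inter> ds_b_twin = {}" using sh(3,6) ds_vecs_distinct(3) by (metis disjoint_iff)
  show "ds_b_basis \<inter> ds_b_single = {}" using sh(4,5) ds_vecs_distinct(4)
    by (metis disjoint_iff)
  show "ds_b_basis \<inter> ds_b_twin = {}" using sh(4,6) ds_vecs_distinct(5)
    by (metis disjoint_iff)
  show "ds_b_single \<inter> ds_b_twin = {}" using sh(5,6) ds_vecs_distinct(6)
    by (metis disjoint_iff)
qed

lemma card_defect_sols:
  "card defect_sols = card ds_kappa0 + card ds_diag + card ds_b_zero + card ds_b_basis
      + card ds_b_single + card ds_b_twin"
proof -
  have "finite ds_kappa0" "finite ds_diag" "finite ds_b_zero" "finite ds_b_basis" "finite ds_b_single" "finite ds_b_twin"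
    using finite_defect_sols defect_sols_eq by (auto intro: finite_subset)
  thus ?thesis unfolding defect_sols_eq using ds_disjoint
    by (simp add: card_Un_disjoint Int_Un_distrib2)
qed

lemma int_card_defect_sols:
  "int (card defect_sols) = (int (card R) + 2) * P ^ card S
     + (int (card S) + 1) * ((P - 1) * (int (card R) + 1) - 1)
     + (int (card S) + int (card S choose 2)) * ((P - 2) * (P - 3))"
proof -
  have le: "1 \<le> (p - 1) * (card R + 1)" using p_ge_2 by simp
  have "int (p - 1) = P - 1" using p_ge_2 by simp
  hence d: "int ((p - 1) * (card R + 1) - 1) = (P - 1) * (int (card R) + 1) - 1"
    unfolding of_nat_diff[OF le] by (simp only: of_nat_mult of_nat_add of_nat_1)
  show ?thesis
    unfolding card_defect_sols card_ds_kappa0 card_ds_diag card_ds_b_zero card_ds_b_basis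
      card_ds_b_single card_ds_b_twin
    by (simp only: of_nat_add of_nat_mult of_nat_power d int_p_minus_2_times_p_minus_3 of_nat_1)
      (simp add: algebra_simps)
qed

end

section \<open>Counting the solutions for beta > 2\<close>

context defect_count begin

text \<open>Here e and t are the base-q digits of the row-k parameter b = e + q t, see core_cond_lift.\<close>

definition lin_sols :: "(int \<times> (nat \<Rightarrow> int) \<times> (nat \<Rightarrow> int) \<times> (nat \<Rightarrow> int)) set" where
  "lin_sols = {(\<kappa>, \<alpha>, e, t). \<kappa> \<in> Pr \<and> \<alpha> \<in> vecs_on R Pr \<and> e \<in> zero_or_basis S \<and> t \<in> vecs_on S Pr \<and>
     (\<forall>i\<in>R. \<forall>j\<in>R. P dvd idem_defect \<alpha> i j - \<kappa> * idem_defect_lin e t i j)}"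

definition "ls_kappa0 = {(0::int, \<alpha>, e, t) | \<alpha> e t. \<alpha> \<in> zero_or_basis R \<and> e \<in> zero_or_basis S
    \<and> t \<in> vecs_on S Pr}"
definition "ls_e0_outside = {(\<kappa>, \<alpha>, \<lambda>_::nat. 0::int, \<lambda>_::nat. 0::int) | \<kappa> \<alpha>. \<kappa> \<in> {1..<P}
    \<and> \<alpha> \<in> zero_or_basis (R - S)}"
definition "ls_e0_inside
    = {(\<kappa>, single_vec v l, \<lambda>_::nat. 0::int, single_vec t l) | \<kappa> l v t. \<kappa> \<in> {1..<P} \<and> l \<in> S \<and> v \<in> {1..<P} \<and> t \<in> Pr
   \<and> P dvd \<kappa> * t - (v - v * v)}"
definition "ls_e_same = {(\<kappa>, single_vec v j, basis_vec j, single_vec t j) | \<kappa> j v t. \<kappa> \<in> {1..<P}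
    \<and> j \<in> S \<and> v \<in> Pr \<and> t \<in> Pr
   \<and> P dvd \<kappa> * t - (v * v - v)}"
definition "ls_e_outside = {(\<kappa>, basis_vec l, basis_vec j, \<lambda>_::nat. 0::int) | \<kappa> j l. \<kappa> \<in> {1..<P}
    \<and> j \<in> S \<and> l \<in> R - S}"
definition "ls_e_inside
    = {(\<kappa>, pair_vec v l ((1 - v) mod P) j, basis_vec j, pair_vec t l ((- t) mod P) j) | \<kappa> j l v t.
   \<kappa> \<in> {1..<P} \<and> j \<in> S \<and> l \<in> S \<and> l \<noteq> j \<and> v \<in> {1..<P} \<and> t \<in> Pr \<and> P dvd \<kappa> * t - (v - v * v)}"

lemma idem_defect_lin_zero: "idem_defect_lin (\<lambda>_. 0) t i j = (if i = j then - t i else 0)"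
  by (simp add: idem_defect_lin_def)

context
  fixes \<kappa> :: int and \<alpha> e t :: "nat \<Rightarrow> int"
  assumes cong: "\<forall>i\<in>R. \<forall>j\<in>R. P dvd idem_defect \<alpha> i j - \<kappa> * idem_defect_lin e t i j"
    and alpha_vec: "\<alpha> \<in> vecs_on R Pr" and t_vec: "t \<in> vecs_on S Pr" and kappa_unit: "\<kappa> \<in> {1..<P}"
begin

lemma lin_sol_facts:
  "\<alpha> s \<in> Pr" "t s \<in> Pr" "s \<notin> R \<Longrightarrow> \<alpha> s = 0" "s \<notin> S \<Longrightarrow> t s = 0" "\<not> P dvd \<kappa>"
  using alpha_vec t_vec kappa_unit not_dvd_nonzero_residue[of \<kappa>]
  by (auto simp: vecs_on_Pr_range) (auto simp: vecs_on_def)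

lemma lin_sol_t_zero: "P dvd \<kappa> * t m \<Longrightarrow> t m = 0"
  using lin_sol_facts(2,5) P_dvd_mult_iff residue_zero_if_dvd by blast

lemma lin_sol_alpha_zero:
  assumes "m \<noteq> l" "l \<in> R" "\<alpha> l \<noteq> 0" "idem_defect_lin e t m l = 0"
  shows "\<alpha> m = 0"
proof (cases "m \<in> R")
  case True
  have "P dvd \<alpha> m * \<alpha> l" using cong True assms
    by (metis idem_defect_off_diag diff_zero mult_zero_right)
  thus ?thesis using residue_zero_if_dvd_mult lin_sol_facts(1) assms(3) by blast
qed (use lin_sol_facts(3) in blast)

lemma lin_sol_e_zero:
  assumes e0: "e = (\<lambda>_. 0)"
  shows "(\<kappa>, \<alpha>, e, t) \<in> ls_e0_outside \<union> ls_e0_inside"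
proof -
  have Di: "P dvd (\<alpha> i * \<alpha> i - \<alpha> i) + \<kappa> * t i" if "i \<in> R" for i
    using cong that e0
    by (metis idem_defect_diag idem_defect_lin_zero diff_minus_eq_add mult_minus_right)
  have t_zero: "t m = 0" if "\<alpha> m = 0" for m
  proof (cases "m \<in> S")
    case True
    hence "P dvd \<kappa> * t m" using Di[of m] that S_subset_R by auto
    thus ?thesis by (rule lin_sol_t_zero)
  qed (use lin_sol_facts(4) in blast)
  show ?thesis
  proof (cases "\<alpha> = (\<lambda>_. 0)")
    case True
    hence "t = (\<lambda>_. 0)" using t_zero by auto
    thus ?thesis using True e0 kappa_unit by (auto simp: ls_e0_outside_def zero_or_basis_def)
  next
    case False
    then obtain l where l: "\<alpha> l \<noteq> 0" by auto
    have lR: "l \<in> R" using lin_sol_facts(3) l by blast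
    have am: "\<alpha> m = 0" if "m \<noteq> l" for m
      using lin_sol_alpha_zero[OF that lR l] e0 that by (simp add: idem_defect_lin_def)
    hence a_eq: "\<alpha> = single_vec (\<alpha> l) l" by (auto simp: single_vec_def fun_eq_iff)
    have t_eq: "t = single_vec (t l) l" using am t_zero by (auto simp: single_vec_def fun_eq_iff)
    show ?thesis
    proof (cases "l \<in> S")
      case False
      hence "t l = 0" using lin_sol_facts(4) by blast
      hence "P dvd \<alpha> l * (\<alpha> l - 1)" using Di[OF lR] by (simp add: algebra_simps)
      hence "P dvd \<alpha> l - 1" using P_dvd_mult_iff not_dvd_nonzero_residue lin_sol_facts(1) l
        by blast
      hence "\<alpha> l = 1" using residue_one_if_dvd lin_sol_facts(1) by blast
      hence "\<alpha> = basis_vec l" using a_eq by simp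
      moreover have "t = (\<lambda>_. 0)" using t_eq \<open>t l = 0\<close>
        by (simp add: single_vec_def)
      moreover have "basis_vec l \<in> zero_or_basis (R - S)" using lR False
        by (simp add: zero_or_basis_def)
      ultimately show ?thesis using e0 kappa_unit by (auto simp: ls_e0_outside_def)
    next
      case True
      have "P dvd \<kappa> * t l - (\<alpha> l - \<alpha> l * \<alpha> l)" using Di[OF lR]
        by (simp add: algebra_simps)
      moreover have "\<alpha> l \<in> {1..<P}" using lin_sol_facts(1)[of l] l by auto
      ultimately show ?thesis using a_eq t_eq e0 kappa_unit True lin_sol_facts(2)[of l]
        unfolding ls_e0_inside_def by blast
    qed
  qed
qed

lemma lin_sol_basis_congs:
  assumes "j \<in> S" and e: "e = basis_vec j"
  shows "i \<in> R \<Longrightarrow> i \<noteq> j \<Longrightarrow> P dvd (\<alpha> i * \<alpha> i - \<alpha> i) + \<kappa> * t i"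
    and "P dvd (\<alpha> j * \<alpha> j - \<alpha> j) - \<kappa> * t j"
    and "i \<in> R \<Longrightarrow> i \<noteq> j \<Longrightarrow> P dvd \<alpha> j * \<alpha> i - \<kappa> * t i"
    and "m \<noteq> j \<Longrightarrow> i \<noteq> j \<Longrightarrow> idem_defect_lin e t m i = (if m = i then - t i else 0)"
proof -
  have jR: "j \<in> R" using assms(1) S_subset_R by blast
  have lin: "idem_defect_lin e t i m = (if i = m then (if i = j then t i else - t i)
      else (if i = j then t m else if m = j then t i else 0))" for i m
    unfolding e idem_defect_lin_def single_vec_def by auto
  show "i \<in> R \<Longrightarrow> i \<noteq> j \<Longrightarrow> P dvd (\<alpha> i * \<alpha> i - \<alpha> i) + \<kappa> * t i"
    using cong lin[of i i] by (metis idem_defect_diag diff_minus_eq_add mult_minus_right)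
  show "P dvd (\<alpha> j * \<alpha> j - \<alpha> j) - \<kappa> * t j"
    using cong jR lin[of j j] by (metis idem_defect_diag)
  show "i \<in> R \<Longrightarrow> i \<noteq> j \<Longrightarrow> P dvd \<alpha> j * \<alpha> i - \<kappa> * t i"
    using cong jR lin[of j i] by (metis idem_defect_off_diag)
  show "m \<noteq> j \<Longrightarrow> i \<noteq> j \<Longrightarrow> idem_defect_lin e t m i = (if m = i then - t i else 0)"
    using lin[of m i] by simp
qed

lemma lin_sol_t_zero_off:
  assumes "j \<in> S" "e = basis_vec j" "m \<noteq> j" "\<alpha> m = 0"
  shows "t m = 0"
proof (cases "m \<in> S")
  case True
  hence "P dvd \<kappa> * t m"
    using lin_sol_basis_congs(1)[OF assms(1,2), of m] assms(3,4) S_subset_R by auto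
  thus ?thesis by (rule lin_sol_t_zero)
qed (use lin_sol_facts(4) in blast)

lemma lin_sol_e_basis_single:
  assumes j: "j \<in> S" and e: "e = basis_vec j" and others: "\<forall>m. m \<noteq> j \<longrightarrow> \<alpha> m = 0"
  shows "(\<kappa>, \<alpha>, e, t) \<in> ls_e_same"
proof -
  have "\<alpha> = single_vec (\<alpha> j) j" using others by (auto simp: single_vec_def fun_eq_iff)
  moreover have "t = single_vec (t j) j"
    using lin_sol_t_zero_off[OF j e] others by (auto simp: single_vec_def fun_eq_iff)
  moreover have "P dvd \<kappa> * t j - (\<alpha> j * \<alpha> j - \<alpha> j)"
    using lin_sol_basis_congs(2)[OF j e] by (metis dvd_minus_iff minus_diff_eq)
  ultimately show ?thesis using e kappa_unit j lin_sol_facts(1,2) unfolding ls_e_same_def by blast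
qed

lemma lin_sol_e_basis_pair:
  assumes j: "j \<in> S" and e: "e = basis_vec j" and lj: "l \<noteq> j" and l: "\<alpha> l \<noteq> 0"
  shows "(\<kappa>, \<alpha>, e, t) \<in> ls_e_outside \<union> ls_e_inside"
proof -
  note congs = lin_sol_basis_congs[OF j e]
  have lR: "l \<in> R" using lin_sol_facts(3) l by blast
  have am: "\<alpha> m = 0" if "m \<noteq> l" "m \<noteq> j" for m
    using lin_sol_alpha_zero[OF that(1) lR l] congs(4) that lj by simp
  have tm: "t m = 0" if "m \<noteq> l" "m \<noteq> j" for m
    using lin_sol_t_zero_off[OF j e that(2) am[OF that]] .
  have "\<alpha> j * \<alpha> l - \<kappa> * t l + ((\<alpha> l * \<alpha> l - \<alpha> l) + \<kappa> * t l) = \<alpha> l * (\<alpha> j + \<alpha> l - 1)"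
    by (simp add: algebra_simps)
  hence "P dvd \<alpha> l * (\<alpha> j + \<alpha> l - 1)"
    using dvd_add[OF congs(3)[OF lR lj] congs(1)[OF lR lj]] by simp
  hence "P dvd \<alpha> j + \<alpha> l - 1"
    using P_dvd_mult_iff not_dvd_nonzero_residue lin_sol_facts(1) l by blast
  moreover have "\<alpha> j + \<alpha> l - 1 = \<alpha> j - (1 - \<alpha> l)" by simp
  ultimately have ajl: "P dvd \<alpha> j - (1 - \<alpha> l)" by simp
  show ?thesis
  proof (cases "l \<in> S")
    case False
    hence tl: "t l = 0" using lin_sol_facts(4) by blast
    hence "P dvd \<alpha> l * (\<alpha> l - 1)" using congs(1)[OF lR lj]
      by (simp add: algebra_simps)
    hence "P dvd \<alpha> l - 1" using P_dvd_mult_iff not_dvd_nonzero_residue lin_sol_facts(1) l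
      by blast
    hence l1: "\<alpha> l = 1" using residue_one_if_dvd lin_sol_facts(1) by blast
    hence "\<alpha> j = 0" using ajl residue_zero_if_dvd lin_sol_facts(1) by simp
    hence "P dvd \<kappa> * t j" using congs(2) by simp
    hence "t j = 0" by (rule lin_sol_t_zero)
    hence "t = (\<lambda>_. 0)" using tm tl by (metis ext)
    moreover have "\<alpha> = basis_vec l" using am l1 \<open>\<alpha> j = 0\<close>
      by (auto simp: single_vec_def fun_eq_iff)
    ultimately show ?thesis using e kappa_unit j lR False unfolding ls_e_outside_def by blast
  next
    case True
    define v where "v = \<alpha> l"
    define u where "u = t l"
    have vP: "v \<in> {1..<P}" using lin_sol_facts(1)[of l] l by (auto simp: v_def)
    have "\<alpha> j mod P = (1 - v) mod P" using ajl unfolding v_def by (simp add: mod_eq_dvd_iff)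
    hence aj: "\<alpha> j = (1 - v) mod P" using lin_sol_facts(1)[of j] by simp
    have dl: "P dvd \<kappa> * u - (v - v * v)"
      using congs(1)[OF lR lj] by (simp add: v_def u_def algebra_simps)
    \<comment> \<open>reduce the diagonal congruence at j by the linear relation between the entries at j and l\<close>
    have "(\<alpha> j * \<alpha> j - \<alpha> j - \<kappa> * t j) - (\<alpha> j - (1 - v)) * (\<alpha> j - v) - (\<kappa> * u - (v - v * v))
        = - (\<kappa> * (t j + u))" by (simp add: algebra_simps)
    moreover have "P dvd (\<alpha> j * \<alpha> j - \<alpha> j - \<kappa> * t j) - (\<alpha> j - (1 - v)) * (\<alpha> j - v)
        - (\<kappa> * u - (v - v * v))"
      using dvd_diff[OF dvd_diff[OF congs(2) dvd_mult2[OF ajl]] dl] unfolding v_def by simp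
    ultimately have "P dvd \<kappa> * (t j + u)" by (metis dvd_minus_iff)
    hence "P dvd t j - (- u)" using P_dvd_mult_iff lin_sol_facts(5) by simp
    hence "t j mod P = (- u) mod P" by (simp add: mod_eq_dvd_iff)
    hence tj: "t j = (- u) mod P" using lin_sol_facts(2)[of j] by simp
    have "\<alpha> = pair_vec v l ((1 - v) mod P) j" using am aj lj
      by (auto simp: pair_vec_def fun_eq_iff v_def)
    moreover have "t = pair_vec u l ((- u) mod P) j" using tm tj lj
      by (auto simp: pair_vec_def fun_eq_iff u_def)
    ultimately show ?thesis using e kappa_unit j True lj vP lin_sol_facts(2)[of l] dl
      unfolding ls_e_inside_def u_def by blast
  qed
qed

end

lemma lin_sols_subset:
  "lin_sols \<subseteq> ls_kappa0 \<union> ls_e0_outside \<union> ls_e0_inside \<union> ls_e_same \<union> ls_e_outside \<union> ls_e_inside"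
proof
  fix z assume "z \<in> lin_sols"
  then obtain \<kappa> \<alpha> e t where z: "z = (\<kappa>, \<alpha>, e, t)" and kP: "\<kappa> \<in> Pr" and ae: "\<alpha> \<in> vecs_on R Pr"
    and eO: "e \<in> zero_or_basis S" and te: "t \<in> vecs_on S Pr"
    and H: "\<forall>i\<in>R. \<forall>j\<in>R. P dvd idem_defect \<alpha> i j - \<kappa> * idem_defect_lin e t i j"
    by (auto simp: lin_sols_def)
  show "z \<in> ls_kappa0 \<union> ls_e0_outside \<union> ls_e0_inside \<union> ls_e_same \<union> ls_e_outside \<union> ls_e_inside"
  proof (cases "\<kappa> = 0")
    case True
    hence "\<forall>i\<in>R. \<forall>j\<in>R. P dvd idem_defect \<alpha> i j" using H by simp
    hence "\<alpha> \<in> zero_or_basis R" using zero_or_basis_if_idem_mod ae by blast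
    thus ?thesis using True eO te by (auto simp: z ls_kappa0_def)
  next
    case False
    hence k: "\<kappa> \<in> {1..<P}" using kP by auto
    show ?thesis
    proof (cases "e = (\<lambda>_. 0)")
      case True
      thus ?thesis using lin_sol_e_zero[OF H ae te k] z by blast
    next
      case False
      then obtain j where e: "e = basis_vec j" and j: "j \<in> S" using eO
        by (auto simp: zero_or_basis_def)
      show ?thesis
        using lin_sol_e_basis_single[OF H ae te k j e] lin_sol_e_basis_pair[OF H ae te k j e] z
        by blast
    qed
  qed
qed

lemma pair_vec_in_vecs_on: "l \<in> I \<Longrightarrow> j \<in> I \<Longrightarrow> a \<in> Pr \<Longrightarrow> b \<in> Pr \<Longrightarrow> pair_vec a l b j \<in> vecs_on I Pr"
  using P_gt_1 by (auto simp: vecs_on_def pair_vec_def)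

lemma ls_e_inside_subset: "ls_e_inside \<subseteq> lin_sols"
proof
  fix z assume "z \<in> ls_e_inside"
  then obtain \<kappa> j l v t where z: "z
      = (\<kappa>, pair_vec v l ((1 - v) mod P) j, basis_vec j, pair_vec t l ((- t) mod P) j)" and
    h: "\<kappa> \<in> {1..<P}" "j \<in> S" "l \<in> S" "l \<noteq> j" "v \<in> {1..<P}" "t \<in> Pr" "P dvd \<kappa> * t - (v - v * v)"
    unfolding ls_e_inside_def by blast
  define a where "a = (1 - v) mod P"
  define b where "b = (- t) mod P"
  have ea: "P dvd a - (1 - v)" unfolding a_def by (subst mod_eq_dvd_iff[symmetric]) simp
  have eb: "P dvd b + t" unfolding b_def using mod_eq_dvd_iff[of b P "- t"] by (simp add: b_def)
  have aP: "a \<in> Pr" "b \<in> Pr" using P_gt_1 by (auto simp: a_def b_def)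
  have dl: "P dvd (v * v - v) - \<kappa> * ((2 * 0 - 1) * t)"
  proof -
    have e: "(v * v - v) - \<kappa> * ((2 * 0 - 1) * t) = \<kappa> * t - (v - v * v)"
      by (simp add: algebra_simps)
    show ?thesis unfolding e using h(7) .
  qed
  have dj: "P dvd (a * a - a) - \<kappa> * ((2 * 1 - 1) * b)"
  proof -
    have e: "(a * a - a) - \<kappa> * ((2 * 1 - 1) * b) = (a - (1 - v)) * (a - v) - \<kappa> * (b + t)
        + (\<kappa> * t - (v - v * v))"
      by (simp add: algebra_simps)
    show ?thesis unfolding e
      using dvd_add[OF dvd_diff[OF dvd_mult2[OF ea] dvd_mult[OF eb]] h(7)] .
  qed
  have dlj: "P dvd v * a - \<kappa> * (0 * b + 1 * t)"
  proof -
    have e: "v * a - \<kappa> * (0 * b + 1 * t) = v * (a - (1 - v)) - (\<kappa> * t - (v - v * v))"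
      by (simp add: algebra_simps)
    show ?thesis unfolding e using dvd_diff[OF dvd_mult[OF ea] h(7)] .
  qed
  have djl: "P dvd a * v - \<kappa> * (1 * t + 0 * b)" using dlj by (simp add: mult.commute)
  have "P dvd idem_defect (pair_vec v l a j) s u - \<kappa>
      * idem_defect_lin (basis_vec j) (pair_vec t l b j) s u" for s u
  proof -
    consider "s = l" "u = l" | "s = j" "u = j" | "s = l" "u = j" | "s = j" "u = l" | "s \<noteq> l \<and> s \<noteq> j
        \<or> u \<noteq> l \<and> u \<noteq> j"
      by blast
    thus ?thesis
    proof cases
      case 1 thus ?thesis using dl h(4)
        by (simp add: idem_defect_def idem_defect_lin_def pair_vec_def single_vec_def)
    next
      case 2 thus ?thesis using dj h(4)
        by (simp add: idem_defect_def idem_defect_lin_def pair_vec_def single_vec_def)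
    next
      case 3 thus ?thesis using dlj h(4)
        by (simp add: idem_defect_def idem_defect_lin_def pair_vec_def single_vec_def)
    next
      case 4 thus ?thesis using djl h(4)
        by (simp add: idem_defect_def idem_defect_lin_def pair_vec_def single_vec_def)
    next
      case 5 thus ?thesis using h(4)
        by (auto simp: idem_defect_def idem_defect_lin_def pair_vec_def single_vec_def)
    qed
  qed
  moreover have "basis_vec j \<in> zero_or_basis S" using h by (simp add: zero_or_basis_def)
  moreover have "v \<in> Pr" using h by auto
  ultimately show "z \<in> lin_sols"
    using h pair_vec_in_vecs_on[of l R j v a] pair_vec_in_vecs_on[of l S j t b] aP S_subset_R
    unfolding z a_def[symmetric] b_def[symmetric] by (auto simp: lin_sols_def)
qed

lemma lin_sols_supset: "ls_kappa0 \<union> ls_e0_outside \<union> ls_e0_inside \<union> ls_e_same \<union> ls_e_outside \<union> ls_e_inside \<subseteq> lin_sols"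
proof -
  have k0: "(0::int) \<in> Pr" using P_gt_1 by auto
  have z0: "(\<lambda>_::nat. 0::int) \<in> vecs_on I Pr" for I using P_gt_1
    by (auto simp: vecs_on_def)
  have O0: "(\<lambda>_::nat. 0::int) \<in> zero_or_basis I" for I by (simp add: zero_or_basis_def)
  have "ls_kappa0 \<subseteq> lin_sols" using idem_defect_zero_or_basis zero_or_basis_in_vecs_on k0
    by (auto simp: ls_kappa0_def lin_sols_def)
  moreover have "ls_e0_outside \<subseteq> lin_sols"
  proof
    fix z assume "z \<in> ls_e0_outside"
    then obtain \<kappa> \<alpha> where z: "z = (\<kappa>, \<alpha>, \<lambda>_. 0, \<lambda>_. 0)" and k: "\<kappa> \<in> {1..<P}"
      and a: "\<alpha> \<in> zero_or_basis (R - S)"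
      by (auto simp: ls_e0_outside_def)
    have aR: "\<alpha> \<in> zero_or_basis R" using zero_or_basis_mono[OF _ a] by blast
    show "z \<in> lin_sols"
      using idem_defect_zero_or_basis[OF aR] zero_or_basis_in_vecs_on[OF aR] k z0 O0
      by (auto simp: z lin_sols_def idem_defect_lin_def)
  qed
  moreover have "ls_e0_inside \<subseteq> lin_sols"
  proof
    fix z assume "z \<in> ls_e0_inside"
    then obtain \<kappa> l v t where z: "z = (\<kappa>, single_vec v l, \<lambda>_. 0, single_vec t l)"
      and h: "\<kappa> \<in> {1..<P}" "l \<in> S" "v \<in> {1..<P}" "t \<in> Pr"
      "P dvd \<kappa> * t - (v - v * v)" by (auto simp: ls_e0_inside_def)
    have d: "P dvd (v * v - v) - \<kappa> * ((2 * 0 - 1) * t)"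
    proof -
      have e: "(v * v - v) - \<kappa> * ((2 * 0 - 1) * t) = \<kappa> * t - (v - v * v)"
        by (simp add: algebra_simps)
      show ?thesis unfolding e using h(5) .
    qed
    have "P dvd idem_defect (single_vec v l) s u - \<kappa>
        * idem_defect_lin (\<lambda>_. 0) (single_vec t l) s u" for s u
      using d by (auto simp: idem_defect_def idem_defect_lin_def single_vec_def)
    thus "z \<in> lin_sols"
      using h single_vec_in_vecs_on[of l R v] single_vec_in_vecs_on[of l S t] S_subset_R O0
      by (auto simp: z lin_sols_def)
  qed
  moreover have "ls_e_same \<subseteq> lin_sols"
  proof
    fix z assume "z \<in> ls_e_same"
    then obtain \<kappa> j v t where z: "z = (\<kappa>, single_vec v j, basis_vec j, single_vec t j)"
      and h: "\<kappa> \<in> {1..<P}" "j \<in> S" "v \<in> Pr" "t \<in> Pr"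
      "P dvd \<kappa> * t - (v * v - v)" by (auto simp: ls_e_same_def)
    have d: "P dvd (v * v - v) - \<kappa> * ((2 * 1 - 1) * t)"
      using h(5)
      by (metis dvd_minus_iff minus_diff_eq mult_1 diff_self mult_2 add_diff_cancel_right')
    have "P dvd idem_defect (single_vec v j) s u - \<kappa>
        * idem_defect_lin (basis_vec j) (single_vec t j) s u" for s u
      using d by (auto simp: idem_defect_def idem_defect_lin_def single_vec_def single_vec_def)
    moreover have "basis_vec j \<in> zero_or_basis S" using h by (simp add: zero_or_basis_def)
    ultimately show "z \<in> lin_sols"
      using h single_vec_in_vecs_on[of j R v] single_vec_in_vecs_on[of j S t] S_subset_R
      by (auto simp: z lin_sols_def)
  qed
  moreover have "ls_e_outside \<subseteq> lin_sols"
  proof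
    fix z assume "z \<in> ls_e_outside"
    then obtain \<kappa> j l where z: "z = (\<kappa>, basis_vec l, basis_vec j, \<lambda>_. 0)"
      and h: "\<kappa> \<in> {1..<P}" "j \<in> S" "l \<in> R - S"
      by (auto simp: ls_e_outside_def)
    have "idem_defect (basis_vec l) s u - \<kappa> * idem_defect_lin (basis_vec j) (\<lambda>_. 0) s u = 0" for s u
      by (auto simp: idem_defect_def idem_defect_lin_def single_vec_def)
    moreover have "basis_vec j \<in> zero_or_basis S" using h by (simp add: zero_or_basis_def)
    ultimately show "z \<in> lin_sols" using h basis_vec_in_vecs_on[of l R] z0
      by (auto simp: z lin_sols_def)
  qed
  moreover have "ls_e_inside \<subseteq> lin_sols" by (rule ls_e_inside_subset)
  ultimately show ?thesis by blast
qed

lemma lin_sols_eq: "lin_sols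
    = ls_kappa0 \<union> ls_e0_outside \<union> ls_e0_inside \<union> ls_e_same \<union> ls_e_outside \<union> ls_e_inside"
  using lin_sols_subset lin_sols_supset by blast

lemma card_ls_kappa0: "card ls_kappa0 = (card R + 1) * ((card S + 1) * p ^ card S)"
proof -
  have eq: "ls_kappa0
      = (\<lambda>(\<alpha>, e, t). (0::int, \<alpha>, e, t)) ` (zero_or_basis R \<times> zero_or_basis S \<times> vecs_on S Pr)"
    by (auto simp: ls_kappa0_def)
  have inj: "inj_on (\<lambda>(\<alpha>, e, t). (0::int, \<alpha>, e, t)) (zero_or_basis R \<times> zero_or_basis S \<times> vecs_on S Pr)"
    by (auto simp: inj_on_def)
  have "card ls_kappa0 = card (zero_or_basis R \<times> zero_or_basis S \<times> vecs_on S Pr)"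
    by (subst eq) (rule card_image[OF inj])
  thus ?thesis using finite_R finite_S
    by (simp add: card_cartesian_product card_zero_or_basis card_vecs_on)
qed

lemma card_ls_e0_outside: "card ls_e0_outside = (p - 1) * (card (R - S) + 1)"
proof -
  have eq: "ls_e0_outside
      = (\<lambda>(\<kappa>, \<alpha>). (\<kappa>, \<alpha>, \<lambda>_::nat. 0::int, \<lambda>_::nat. 0::int)) ` ({1..<P} \<times> zero_or_basis (R - S))"
    by (auto simp: ls_e0_outside_def)
  have inj: "inj_on (\<lambda>(\<kappa>, \<alpha>). (\<kappa>, \<alpha>, \<lambda>_::nat. 0::int, \<lambda>_::nat. 0::int)) ({1..<P} \<times> zero_or_basis (R - S))"
    by (auto simp: inj_on_def)
  have "card ls_e0_outside = card ({1..<P} \<times> zero_or_basis (R - S))"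
    by (subst eq) (rule card_image[OF inj])
  thus ?thesis using finite_R
    by (simp add: card_cartesian_product card_zero_or_basis card_1_to_P nat_P_minus_1)
qed

lemma card_ls_e0_inside: "card ls_e0_inside = (p - 1) * card S * (p - 1)"
proof -
  define X where "X = {1..<P} \<times> S \<times> {1..<P}"
  define Y where "Y = {(x, t). x \<in> X \<and> t \<in> Pr \<and> P dvd fst x * t
      - (snd (snd x) - snd (snd x) * snd (snd x))}"
  have eq: "ls_e0_inside
      = (\<lambda>((\<kappa>, l, v), t). (\<kappa>, single_vec v l, \<lambda>_::nat. 0::int, single_vec t l)) ` Y"
  proof
    show "ls_e0_inside \<subseteq> (\<lambda>((\<kappa>, l, v), t). (\<kappa>, single_vec v l, \<lambda>_::nat. 0::int, single_vec t l)) ` Y"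
    proof
      fix z assume "z \<in> ls_e0_inside"
      then obtain \<kappa> l v t where z: "z = (\<kappa>, single_vec v l, \<lambda>_. 0, single_vec t l)"
        and h: "\<kappa> \<in> {1..<P}" "l \<in> S" "v \<in> {1..<P}" "t \<in> Pr"
        "P dvd \<kappa> * t - (v - v * v)" unfolding ls_e0_inside_def by blast
      show "z \<in> (\<lambda>((\<kappa>, l, v), t). (\<kappa>, single_vec v l, \<lambda>_::nat. 0::int, single_vec t l)) ` Y"
        by (rule image_eqI[where x = "((\<kappa>, l, v), t)"]) (use z h in \<open>auto simp: Y_def X_def\<close>)
    qed
    show "(\<lambda>((\<kappa>, l, v), t). (\<kappa>, single_vec v l, \<lambda>_::nat. 0::int, single_vec t l)) ` Y \<subseteq> ls_e0_inside"
      unfolding ls_e0_inside_def Y_def X_def by fastforce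
  qed
  have inj: "inj_on (\<lambda>((\<kappa>, l, v), t). (\<kappa>, single_vec v l, \<lambda>_::nat. 0::int, single_vec t l)) Y"
  proof (rule inj_onI, clarsimp)
    fix \<kappa> l v t l' v' t'
    assume h: "((\<kappa>, l, v), t) \<in> Y" "((\<kappa>, l', v'), t') \<in> Y" "single_vec v l
        = single_vec v' l'" "single_vec t l = single_vec t' l'"
    have v0: "v \<noteq> 0" using h(1) by (auto simp: Y_def X_def)
    have "single_vec v l l = single_vec v' l' l" using h(3) by simp
    hence ll: "l = l'" using v0 by (auto simp: single_vec_def split: if_splits)
    have "v = v'" using fun_cong[OF h(3), of l] ll by (simp add: single_vec_def)
    moreover have "t = t'" using fun_cong[OF h(4), of l] ll by (simp add: single_vec_def)
    ultimately show "l = l' \<and> v = v' \<and> t = t'" using ll by simp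
  qed
  have "card ls_e0_inside = card Y" by (subst eq) (rule card_image[OF inj])
  also have "\<dots> = card X" unfolding Y_def
  proof (rule card_linear_cong_family)
    show "finite X" using finite_S by (simp add: X_def)
    fix x assume "x \<in> X" thus "\<not> P dvd fst x" using not_dvd_nonzero_residue[of "fst x"]
      by (auto simp: X_def)
  qed
  also have "\<dots> = (p - 1) * card S * (p - 1)"
    by (simp add: X_def card_cartesian_product card_1_to_P nat_P_minus_1)
  finally show ?thesis .
qed

lemma card_ls_e_same: "card ls_e_same = (p - 1) * card S * p"
proof -
  define X where "X = {1..<P} \<times> S \<times> Pr"
  define Y where "Y = {(x, t). x \<in> X \<and> t \<in> Pr \<and> P dvd fst x * t
      - (snd (snd x) * snd (snd x) - snd (snd x))}"
  have eq: "ls_e_same = (\<lambda>((\<kappa>, j, v), t). (\<kappa>, single_vec v j, basis_vec j, single_vec t j)) ` Y"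
  proof
    show "ls_e_same \<subseteq> (\<lambda>((\<kappa>, j, v), t). (\<kappa>, single_vec v j, basis_vec j, single_vec t j)) ` Y"
    proof
      fix z assume "z \<in> ls_e_same"
      then obtain \<kappa> j v t where z: "z = (\<kappa>, single_vec v j, basis_vec j, single_vec t j)"
        and h: "\<kappa> \<in> {1..<P}" "j \<in> S" "v \<in> Pr" "t \<in> Pr"
        "P dvd \<kappa> * t - (v * v - v)" unfolding ls_e_same_def by blast
      show "z \<in> (\<lambda>((\<kappa>, j, v), t). (\<kappa>, single_vec v j, basis_vec j, single_vec t j)) ` Y"
        by (rule image_eqI[where x = "((\<kappa>, j, v), t)"]) (use z h in \<open>auto simp: Y_def X_def\<close>)
    qed
    show "(\<lambda>((\<kappa>, j, v), t). (\<kappa>, single_vec v j, basis_vec j, single_vec t j)) ` Y \<subseteq> ls_e_same"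
      unfolding ls_e_same_def Y_def X_def by fastforce
  qed
  have inj: "inj_on (\<lambda>((\<kappa>, j, v), t). (\<kappa>, single_vec v j, basis_vec j, single_vec t j)) Y"
  proof (rule inj_onI, clarsimp)
    fix \<kappa> j v t j' v' t'
    assume h: "single_vec v j = single_vec v' j'" "basis_vec j = basis_vec j'" "single_vec t j
        = single_vec t' j'"
    have jj: "j = j'" using h(2) basis_vec_eq_iff by blast
    have "v = v'" using fun_cong[OF h(1), of j] jj by (simp add: single_vec_def)
    moreover have "t = t'" using fun_cong[OF h(3), of j] jj by (simp add: single_vec_def)
    ultimately show "j = j' \<and> v = v' \<and> t = t'" using jj by simp
  qed
  have "card ls_e_same = card Y" by (subst eq) (rule card_image[OF inj])
  also have "\<dots> = card X" unfolding Y_def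
  proof (rule card_linear_cong_family)
    show "finite X" using finite_S by (simp add: X_def)
    fix x assume "x \<in> X" thus "\<not> P dvd fst x" using not_dvd_nonzero_residue[of "fst x"]
      by (auto simp: X_def)
  qed
  also have "\<dots> = (p - 1) * card S * p"
    by (simp add: X_def card_cartesian_product card_1_to_P nat_P_minus_1)
  finally show ?thesis .
qed

lemma card_ls_e_outside: "card ls_e_outside = (p - 1) * card S * card (R - S)"
proof -
  have eq: "ls_e_outside
      = (\<lambda>(\<kappa>, j, l). (\<kappa>, basis_vec l, basis_vec j, \<lambda>_::nat. 0::int)) ` ({1..<P} \<times> S \<times> (R - S))"
  proof
    show "ls_e_outside \<subseteq> (\<lambda>(\<kappa>, j, l). (\<kappa>, basis_vec l, basis_vec j, \<lambda>_::nat. 0::int)) ` ({1..<P} \<times> S \<times> (R - S))"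
    proof
      fix z assume "z \<in> ls_e_outside"
      then obtain \<kappa> j l where z: "z = (\<kappa>, basis_vec l, basis_vec j, \<lambda>_. 0)"
        and h: "\<kappa> \<in> {1..<P}" "j \<in> S" "l \<in> R - S"
        unfolding ls_e_outside_def by blast
      show "z \<in> (\<lambda>(\<kappa>, j, l). (\<kappa>, basis_vec l, basis_vec j, \<lambda>_::nat. 0::int)) ` ({1..<P} \<times> S \<times> (R - S))"
        by (rule image_eqI[where x = "(\<kappa>, j, l)"]) (use z h in auto)
    qed
    show "(\<lambda>(\<kappa>, j, l). (\<kappa>, basis_vec l, basis_vec j, \<lambda>_::nat. 0::int)) ` ({1..<P} \<times> S \<times> (R - S)) \<subseteq> ls_e_outside"
      unfolding ls_e_outside_def by fastforce
  qed
  have inj: "inj_on (\<lambda>(\<kappa>, j, l). (\<kappa>, basis_vec l, basis_vec j, \<lambda>_::nat. 0::int)) ({1..<P} \<times> S \<times> (R - S))"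
    by (auto simp: inj_on_def basis_vec_eq_iff)
  have "card ls_e_outside = card ({1..<P} \<times> S \<times> (R - S))"
    by (subst eq) (rule card_image[OF inj])
  thus ?thesis by (simp add: card_cartesian_product card_1_to_P nat_P_minus_1)
qed

definition "distinct_pairs = {(j, l). j \<in> S \<and> l \<in> S \<and> l \<noteq> j}"

lemma card_distinct_pairs: "card distinct_pairs = card S * (card S - 1)"
proof -
  have "distinct_pairs = Sigma S (\<lambda>j. S - {j})" by (auto simp: distinct_pairs_def)
  hence "card distinct_pairs = (\<Sum>j\<in>S. card (S - {j}))" using finite_S
    by (simp add: card_SigmaI)
  also have "\<dots> = (\<Sum>j\<in>S. card S - 1)" using finite_S
    by (intro sum.cong) (auto simp: card_Diff_singleton)
  finally show ?thesis by (simp add: mult.commute)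
qed

lemma finite_distinct_pairs: "finite distinct_pairs"
proof -
  have "distinct_pairs \<subseteq> S \<times> S" by (auto simp: distinct_pairs_def)
  thus ?thesis using finite_S finite_subset by blast
qed

lemma card_ls_e_inside: "card ls_e_inside = (p - 1) * (card S * (card S - 1)) * (p - 1)"
proof -
  define X where "X = {1..<P} \<times> distinct_pairs \<times> {1..<P}"
  define Y where "Y = {(x, t). x \<in> X \<and> t \<in> Pr \<and> P dvd fst x * t
      - (snd (snd x) - snd (snd x) * snd (snd x))}"
  define f where "f
      = (\<lambda>((\<kappa>::int, (j::nat, l::nat), v::int), t::int). (\<kappa>, pair_vec v l ((1 - v) mod P) j, basis_vec j, pair_vec t l ((- t) mod P) j))"
  have eq: "ls_e_inside = f ` Y"
  proof
    show "ls_e_inside \<subseteq> f ` Y"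
    proof
      fix z assume "z \<in> ls_e_inside"
      then obtain \<kappa> j l v t where z: "z
          = (\<kappa>, pair_vec v l ((1 - v) mod P) j, basis_vec j, pair_vec t l ((- t) mod P) j)" and
        h: "\<kappa> \<in> {1..<P}" "j \<in> S" "l \<in> S" "l \<noteq> j" "v \<in> {1..<P}" "t \<in> Pr" "P dvd \<kappa> * t - (v - v * v)"
        unfolding ls_e_inside_def by blast
      show "z \<in> f ` Y"
        by (rule image_eqI[where x = "((\<kappa>, (j, l), v), t)"]) (use z h in \<open>auto simp: Y_def X_def distinct_pairs_def f_def\<close>)
    qed
    show "f ` Y \<subseteq> ls_e_inside"
      unfolding ls_e_inside_def Y_def X_def distinct_pairs_def f_def by fastforce
  qed
  have inj: "inj_on f Y"
  proof (rule inj_onI)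
    fix x y assume xy: "x \<in> Y" "y \<in> Y" "f x = f y"
    obtain \<kappa> j l v t where x: "x = ((\<kappa>, (j, l), v), t)" by (metis prod.collapse)
    obtain \<kappa>' j' l' v' t' where y: "y = ((\<kappa>', (j', l'), v'), t')"
      by (metis prod.collapse)
    have h: "\<kappa> = \<kappa>'" "pair_vec v l ((1 - v) mod P) j
        = pair_vec v' l' ((1 - v') mod P) j'" "basis_vec j = basis_vec j'"
      "pair_vec t l ((- t) mod P) j = pair_vec t' l' ((- t') mod P) j'" using xy(3)
        by (auto simp: x y f_def)
    have r: "l \<noteq> j" "l' \<noteq> j'" "v \<noteq> 0" "v' \<noteq> 0" using xy(1,2)
      by (auto simp: x y Y_def X_def distinct_pairs_def)
    have jj: "j = j'" using h(3) basis_vec_eq_iff by blast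
    have "pair_vec v' l' ((1 - v') mod P) j' l \<noteq> 0" using fun_cong[OF h(2), of l] r
      by (simp add: pair_vec_def)
    hence ll: "l = l'" using r jj by (auto simp: pair_vec_def split: if_splits)
    have "v = v'" using fun_cong[OF h(2), of l] ll r by (simp add: pair_vec_def)
    moreover have "t = t'" using fun_cong[OF h(4), of l] ll r by (simp add: pair_vec_def)
    ultimately show "x = y" using h(1) jj ll by (simp add: x y)
  qed
  have "card ls_e_inside = card Y" by (subst eq) (rule card_image[OF inj])
  also have "\<dots> = card X" unfolding Y_def
  proof (rule card_linear_cong_family)
    show "finite X" using finite_distinct_pairs by (simp add: X_def)
    fix x assume "x \<in> X" thus "\<not> P dvd fst x" using not_dvd_nonzero_residue[of "fst x"]
      by (auto simp: X_def)
  qed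
  also have "\<dots> = (p - 1) * (card S * (card S - 1)) * (p - 1)"
    by (simp add: X_def card_cartesian_product card_1_to_P card_distinct_pairs nat_P_minus_1)
  finally show ?thesis .
qed

lemma finite_lin_sols: "finite lin_sols"
proof -
  have "lin_sols \<subseteq> Pr \<times> vecs_on R Pr \<times> zero_or_basis S \<times> vecs_on S Pr"
    by (auto simp: lin_sols_def)
  moreover have "finite (Pr \<times> vecs_on R Pr \<times> zero_or_basis S \<times> vecs_on S Pr)"
    using finite_R finite_S finite_vecs_on finite_zero_or_basis by auto
  ultimately show ?thesis using finite_subset by blast
qed

lemma ls_shapes:
  "z \<in> ls_kappa0 \<Longrightarrow> fst z = 0"
  "z \<in> ls_e0_outside \<Longrightarrow> fst z \<ge> 1 \<and> fst (snd (snd z)) = (\<lambda>_. 0) \<and> (\<forall>s\<in>S. fst (snd z) s = 0)"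
  "z \<in> ls_e0_inside \<Longrightarrow> fst z \<ge> 1 \<and> fst (snd (snd z)) = (\<lambda>_. 0) \<and> (\<exists>l\<in>S. fst (snd z) l \<noteq> 0)"
  "z \<in> ls_e_same \<Longrightarrow> fst z \<ge> 1
      \<and> (\<exists>j. fst (snd (snd z)) = basis_vec j \<and> (\<forall>s. s \<noteq> j \<longrightarrow> fst (snd z) s = 0))"
  "z \<in> ls_e_outside \<Longrightarrow> fst z \<ge> 1
      \<and> (\<exists>j l. fst (snd (snd z)) = basis_vec j \<and> l \<notin> S \<and> l \<noteq> j \<and> fst (snd z) l \<noteq> 0
      \<and> (\<forall>s. s \<noteq> l \<longrightarrow> fst (snd z) s = 0))"
  "z \<in> ls_e_inside \<Longrightarrow> fst z \<ge> 1
      \<and> (\<exists>j l. fst (snd (snd z)) = basis_vec j \<and> l \<in> S \<and> l \<noteq> j \<and> fst (snd z) l \<noteq> 0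
      \<and> (\<forall>s. s \<noteq> l \<longrightarrow> s \<noteq> j \<longrightarrow> fst (snd z) s = 0))"
proof -
  show "z \<in> ls_kappa0 \<Longrightarrow> fst z = 0" by (auto simp: ls_kappa0_def)
  show "z \<in> ls_e0_outside \<Longrightarrow> fst z \<ge> 1 \<and> fst (snd (snd z)) = (\<lambda>_. 0) \<and> (\<forall>s\<in>S. fst (snd z) s = 0)"
    by (auto simp: ls_e0_outside_def zero_or_basis_def single_vec_def)
  show "z \<in> ls_e0_inside \<Longrightarrow> fst z \<ge> 1 \<and> fst (snd (snd z)) = (\<lambda>_. 0) \<and> (\<exists>l\<in>S. fst (snd z) l \<noteq> 0)"
    by (auto simp: ls_e0_inside_def single_vec_def)
  show "z \<in> ls_e_same \<Longrightarrow> fst z \<ge> 1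
      \<and> (\<exists>j. fst (snd (snd z)) = basis_vec j \<and> (\<forall>s. s \<noteq> j \<longrightarrow> fst (snd z) s = 0))"
    by (auto simp: ls_e_same_def single_vec_def)
  show "z \<in> ls_e_outside \<Longrightarrow> fst z \<ge> 1
      \<and> (\<exists>j l. fst (snd (snd z)) = basis_vec j \<and> l \<notin> S \<and> l \<noteq> j \<and> fst (snd z) l \<noteq> 0
      \<and> (\<forall>s. s \<noteq> l \<longrightarrow> fst (snd z) s = 0))"
    by (auto simp: ls_e_outside_def single_vec_def)
  show "z \<in> ls_e_inside \<Longrightarrow> fst z \<ge> 1
      \<and> (\<exists>j l. fst (snd (snd z)) = basis_vec j \<and> l \<in> S \<and> l \<noteq> j \<and> fst (snd z) l \<noteq> 0
      \<and> (\<forall>s. s \<noteq> l \<longrightarrow> s \<noteq> j \<longrightarrow> fst (snd z) s = 0))"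
  proof -
    assume "z \<in> ls_e_inside"
    then obtain \<kappa> j l v t where z: "z
        = (\<kappa>, pair_vec v l ((1 - v) mod P) j, basis_vec j, pair_vec t l ((- t) mod P) j)" and
      h: "\<kappa> \<in> {1..<P}" "j \<in> S" "l \<in> S" "l \<noteq> j" "v \<in> {1..<P}"
      unfolding ls_e_inside_def by blast
    have "fst (snd (snd z)) = basis_vec j \<and> l \<in> S \<and> l \<noteq> j \<and> fst (snd z) l \<noteq> 0
      \<and> (\<forall>s. s \<noteq> l \<longrightarrow> s \<noteq> j \<longrightarrow> fst (snd z) s = 0)" using z h by (auto simp: pair_vec_def)
    moreover have "fst z \<ge> 1" using z h by simp
    ultimately show ?thesis by blast
  qed
qed

lemma ls_disjoint:
  "ls_kappa0 \<inter> ls_e0_outside = {}" "ls_kappa0 \<inter> ls_e0_inside = {}" "ls_kappa0 \<inter> ls_e_same = {}"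
  "ls_kappa0 \<inter> ls_e_outside = {}" "ls_kappa0 \<inter> ls_e_inside = {}"
  "ls_e0_outside \<inter> ls_e0_inside = {}" "ls_e0_outside \<inter> ls_e_same = {}"
  "ls_e0_outside \<inter> ls_e_outside = {}" "ls_e0_outside \<inter> ls_e_inside = {}"
  "ls_e0_inside \<inter> ls_e_same = {}" "ls_e0_inside \<inter> ls_e_outside = {}" "ls_e0_inside \<inter> ls_e_inside = {}"
  "ls_e_same \<inter> ls_e_outside = {}" "ls_e_same \<inter> ls_e_inside = {}" "ls_e_outside \<inter> ls_e_inside = {}"
proof -
  note sh = ls_shapes
  note u0 = basis_vec_nonzero
  show "ls_kappa0 \<inter> ls_e0_outside = {}" using sh(1,2) by fastforce
  show "ls_kappa0 \<inter> ls_e0_inside = {}" using sh(1,3) by fastforce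
  show "ls_kappa0 \<inter> ls_e_same = {}" using sh(1,4) by fastforce
  show "ls_kappa0 \<inter> ls_e_outside = {}" using sh(1,5) by fastforce
  show "ls_kappa0 \<inter> ls_e_inside = {}" using sh(1,6) by fastforce
  show "ls_e0_outside \<inter> ls_e0_inside = {}" using sh(2,3) by (metis disjoint_iff)
  show "ls_e0_outside \<inter> ls_e_same = {}" using sh(2,4) u0 by (metis disjoint_iff)
  show "ls_e0_outside \<inter> ls_e_outside = {}" using sh(2,5) u0 by (metis disjoint_iff)
  show "ls_e0_outside \<inter> ls_e_inside = {}" using sh(2,6) u0 by (metis disjoint_iff)
  show "ls_e0_inside \<inter> ls_e_same = {}" using sh(3,4) u0 by (metis disjoint_iff)
  show "ls_e0_inside \<inter> ls_e_outside = {}" using sh(3,5) u0 by (metis disjoint_iff)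
  show "ls_e0_inside \<inter> ls_e_inside = {}" using sh(3,6) u0 by (metis disjoint_iff)
  show "ls_e_same \<inter> ls_e_outside = {}"
  proof (rule equals0I)
    fix z assume "z \<in> ls_e_same \<inter> ls_e_outside" hence "z \<in> ls_e_same" "z \<in> ls_e_outside"
      by auto
    then obtain j j' l where "fst (snd (snd z)) = basis_vec j" "\<forall>s. s \<noteq> j \<longrightarrow> fst (snd z) s = 0"
      "fst (snd (snd z)) = basis_vec j'" "l \<noteq> j'" "fst (snd z) l \<noteq> 0" using sh(4,5)
        by meson
    thus False using basis_vec_eq_iff by metis
  qed
  show "ls_e_same \<inter> ls_e_inside = {}"
  proof (rule equals0I)
    fix z assume "z \<in> ls_e_same \<inter> ls_e_inside" hence "z \<in> ls_e_same" "z \<in> ls_e_inside"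
      by auto
    then obtain j j' l where "fst (snd (snd z)) = basis_vec j" "\<forall>s. s \<noteq> j \<longrightarrow> fst (snd z) s = 0"
      "fst (snd (snd z)) = basis_vec j'" "l \<noteq> j'" "fst (snd z) l \<noteq> 0" using sh(4,6)
        by meson
    thus False using basis_vec_eq_iff by metis
  qed
  show "ls_e_outside \<inter> ls_e_inside = {}"
  proof (rule equals0I)
    fix z assume "z \<in> ls_e_outside \<inter> ls_e_inside" hence "z \<in> ls_e_outside" "z \<in> ls_e_inside"
      by auto
    then obtain j l j' l' where a: "fst (snd (snd z))
        = basis_vec j" "l \<notin> S" "l \<noteq> j" "fst (snd z) l \<noteq> 0"
      "fst (snd (snd z)) = basis_vec j'" "l' \<in> S" "\<forall>s. s \<noteq> l' \<longrightarrow> s \<noteq> j' \<longrightarrow> fst (snd z) s = 0"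
        using sh(5,6) by meson
    have "j = j'" using a basis_vec_eq_iff by metis
    moreover have "l \<noteq> l'" using a by auto
    ultimately show False using a by metis
  qed
qed

lemma card_lin_sols:
  "card lin_sols = card ls_kappa0 + card ls_e0_outside + card ls_e0_inside + card ls_e_same
      + card ls_e_outside + card ls_e_inside"
proof -
  have "finite ls_kappa0" "finite ls_e0_outside" "finite ls_e0_inside" "finite ls_e_same" "finite ls_e_outside" "finite ls_e_inside"
    using finite_lin_sols lin_sols_eq by (auto intro: finite_subset)
  thus ?thesis unfolding lin_sols_eq using ls_disjoint
    by (simp add: card_Un_disjoint Int_Un_distrib2)
qed

lemma int_card_lin_sols:
  "int (card lin_sols) = (int (card R) + 1) * (int (card S) + 1) * P ^ card S
     + (P - 1) * (int (card (R - S)) + 1)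
     + (P - 1) * int (card S) * ((P - 1) + P + int (card (R - S)) + (int (card S) - 1) * (P - 1))"
proof -
  have d: "int (card S - 1) = int (card S) - 1" if "card S \<noteq> 0" using that by simp
  have "int (card S * (card S - 1)) = int (card S) * (int (card S) - 1)"
    by (cases "card S = 0") (simp_all add: d)
  moreover have "int (p - 1) = P - 1" using p_ge_2 by simp
  ultimately show ?thesis
    unfolding card_lin_sols card_ls_kappa0 card_ls_e0_outside card_ls_e0_inside card_ls_e_same
      card_ls_e_outside card_ls_e_inside
    by (simp only: of_nat_add of_nat_mult of_nat_power of_nat_1) (simp add: algebra_simps)
qed

end

section \<open>The number of subring matrices\<close>

context three_beta_comp begin

lemma S_subset_R: "S \<subseteq> R" using k_bounds by (auto simp: S_def R_def)

lemma defect_count_inst: "defect_count p R S"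
  using pp finite_R S_subset_R by (unfold_locales) auto

lemma card_S: "card S = n - k - 2" by (simp add: S_def)

lemma card_R_minus_S: "card (R - S) = k - 1"
proof -
  have "R - S = {1..<k}" using k_bounds by (auto simp: R_def S_def)
  thus ?thesis by simp
qed

lemma core_eq_defect_sols: assumes "\<beta> = 2" shows "core = defect_count.defect_sols p R S"
proof -
  have q1: "q = 1" using assms by simp
  have "rowk_params = vecs_on S {0..<P}" unfolding rowk_params_def using assms by simp
  thus ?thesis
    unfolding core_def defect_count.defect_sols_def[OF defect_count_inst] core_cond_def q1 by auto
qed

lemma g_comp_beta_eq_2:
  assumes b2: "\<beta> = 2"
  shows "int (g comp p) =
             (int n - 1) * int p ^ (2*n - k - 5)
             + (int n - int k - 1) * (int n - 2) * int p ^ (n - 3) * (int p - 1)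
             - (int n - int k - 1) * int p ^ (n - 3)
             + ((int n - int k - 2) + int ((n - k - 2) choose 2))
                 * int p ^ (n - 3) * (int p - 2) * (int p - 3)"
proof -
  interpret X: defect_count p R S by (rule defect_count_inst)
  have "int (g comp p) = int (card X.defect_sols) * P ^ (n - 3)"
    using g_eq_card_params card_params core_eq_defect_sols[OF b2] by simp
  moreover have "card R = n - 3" "card S = n - k - 2" by (rule card_R, rule card_S)
  moreover have "2 * n - k - 5 = (n - k - 2) + (n - 3)" using kn n3 by arith
  hence "P ^ (2 * n - k - 5) = P ^ (n - k - 2) * P ^ (n - 3)" by (simp only: power_add)
  ultimately show ?thesis using n3 kn
    by (simp add: X.int_card_defect_sols of_nat_diff algebra_simps)
qed

lemma q_mult_P: "q * P = P ^ (\<beta> - 1)"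
proof -
  have "\<beta> - 1 = Suc (\<beta> - 2)" using b1 by simp
  thus ?thesis by (simp add: mult.commute)
qed

context
  assumes beta_gt_2: "\<beta> > 2"
begin

lemma q_gt_1: "q > 1" using P_gt_1 beta_gt_2 by simp

lemma P_dvd_q: "P dvd q" using beta_gt_2 by (simp add: dvd_power)

lemma lift_in_rowk_params:
  assumes e: "e \<in> zero_or_basis S" and t: "t \<in> vecs_on S Pr"
  shows "(\<lambda>s. e s + q * t s) \<in> rowk_params"
proof -
  have "0 \<le> e s + q * t s \<and> e s + q * t s < P ^ (\<beta> - 1)" if "s \<in> S" for s
  proof -
    have h: "e s = 0 \<or> e s = 1" "0 \<le> t s" "t s \<le> P - 1"
      using zero_or_basis_props(3)[OF e] t that by (auto simp: vecs_on_def)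
    have "q * t s \<le> q * (P - 1)" using h q_gt_1 by (intro mult_left_mono) auto
    hence "e s + q * t s < q * P" using h q_gt_1 by (auto simp: algebra_simps)
    thus ?thesis using h q_gt_1 q_mult_P by auto
  qed
  moreover have "e s + q * t s = 0" if "s \<notin> S" for s
    using zero_or_basis_props(4)[OF e that] t that by (auto simp: vecs_on_def)
  ultimately show ?thesis by (auto simp: rowk_params_def vecs_on_def)
qed

lemma rowk_params_split:
  assumes b: "b \<in> rowk_params" and idem: "\<forall>i\<in>S. \<forall>j\<in>S. q dvd idem_defect b i j"
  shows "(\<lambda>s. b s mod q) \<in> zero_or_basis S" "(\<lambda>s. b s div q) \<in> vecs_on S Pr"
proof -
  have bS: "b s = 0" if "s \<notin> S" for s using b that
    by (auto simp: rowk_params_def vecs_on_def)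
  have "(\<lambda>s. b s mod q) \<in> vecs_on S {0..<q}"
    using q_pos bS by (auto simp: vecs_on_def pos_mod_sign pos_mod_bound)
  moreover have "q dvd idem_defect (\<lambda>s. b s mod q) i j" if "i \<in> S" "j \<in> S" for i j
    using idem that idem_defect_mod_cong[of "\<lambda>s. b s mod q" i q b j]
    by (simp add: dvd_eq_mod_eq_0)
  ultimately show "(\<lambda>s. b s mod q) \<in> zero_or_basis S"
    using beta_gt_2
    by (intro zero_or_basis_if_idem_mod_prime_power[OF prime_P, of "\<beta> - 2"]) auto
  have "0 \<le> b s div q \<and> b s div q < P" if "s \<in> S" for s
  proof -
    have "0 \<le> b s" "b s < P * q" using b that q_mult_P
      by (auto simp: rowk_params_def vecs_on_def mult.commute)
    moreover have qp: "0 < q" using p_pos by simp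
    ultimately show ?thesis
      by (simp add: pos_imp_zdiv_nonneg_iff[OF qp] zdiv_less_if_less_mult[OF qp])
  qed
  thus "(\<lambda>s. b s div q) \<in> vecs_on S Pr" using bS by (auto simp: vecs_on_def)
qed

lemma core_cond_lift:
  assumes "e \<in> zero_or_basis S"
  shows "core_cond \<kappa> \<alpha> (\<lambda>s. e s + q * t s) \<longleftrightarrow>
    (\<forall>i\<in>R. \<forall>j\<in>R. P dvd idem_defect \<alpha> i j - \<kappa> * idem_defect_lin e t i j)"
proof -
  have "P dvd idem_defect \<alpha> i j - \<kappa> * (idem_defect_lin e t i j + q * (t i * t j))
      \<longleftrightarrow> P dvd idem_defect \<alpha> i j - \<kappa> * idem_defect_lin e t i j" for i j
  proof -
    have "P dvd - (\<kappa> * q * (t i * t j))" using P_dvd_q by simp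
    hence "P dvd (idem_defect \<alpha> i j - \<kappa> * idem_defect_lin e t i j) + - (\<kappa> * q * (t i * t j))
        \<longleftrightarrow> P dvd idem_defect \<alpha> i j - \<kappa> * idem_defect_lin e t i j"
      by (rule dvd_add_left_iff)
    thus ?thesis by (simp add: algebra_simps)
  qed
  moreover have "q * x div q = x" for x using p_pos by simp
  ultimately show ?thesis using p_pos by (simp add: core_cond_def idem_defect_lift[OF assms])
qed

lemma card_core_eq_lin_sols: "card core = card (defect_count.lin_sols p R S)"
proof -
  interpret X: defect_count p R S by (rule defect_count_inst)
  define lift where "lift
      = (\<lambda>(\<kappa>::int, \<alpha>::nat \<Rightarrow> int, e::nat \<Rightarrow> int, t::nat \<Rightarrow> int). (\<kappa>, \<alpha>, \<lambda>s. e s + q * t s))"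
  define split where "split
      = (\<lambda>(\<kappa>::int, \<alpha>::nat \<Rightarrow> int, b::nat \<Rightarrow> int). (\<kappa>, \<alpha>, \<lambda>s. b s mod q, \<lambda>s. b s div q))"
  have "bij_betw lift X.lin_sols core"
  proof (rule bij_betw_byWitness[where f' = split])
    have "(e s + q * t s) mod q = e s" "(e s + q * t s) div q
        = t s" if "e \<in> zero_or_basis S" for e t s
    proof -
      have "0 \<le> e s" "e s < q" using zero_or_basis_props(3)[OF that, of s] q_gt_1 p_pos by auto
      thus "(e s + q * t s) mod q = e s" "(e s + q * t s) div q = t s"
        using p_pos by (simp_all add: mod_pos_pos_trivial div_pos_pos_trivial)
    qed
    thus "\<forall>x\<in>X.lin_sols. split (lift x) = x"
      by (auto simp: X.lin_sols_def lift_def split_def)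
    show "\<forall>y\<in>core. lift (split y) = y" by (auto simp: lift_def split_def)
    show "lift ` X.lin_sols \<subseteq> core"
      using lift_in_rowk_params core_cond_lift by (auto simp: X.lin_sols_def lift_def core_def)
    show "split ` core \<subseteq> X.lin_sols"
    proof
      fix z assume "z \<in> split ` core"
      then obtain \<kappa> \<alpha> b where z: "z = split (\<kappa>, \<alpha>, b)" and k: "\<kappa> \<in> Pr" and a: "\<alpha> \<in> vecs_on R Pr"
        and b: "b \<in> rowk_params" and c: "core_cond \<kappa> \<alpha> b" by (auto simp: core_def)
      have "\<forall>i\<in>S. \<forall>j\<in>S. q dvd idem_defect b i j" using c S_subset_R
        by (auto simp: core_cond_def)
      note parts = rowk_params_split[OF b this]
      have "(\<lambda>s. b s mod q + q * (b s div q)) = b" by simp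
      hence "\<forall>i\<in>R. \<forall>j\<in>R. P dvd idem_defect \<alpha> i j
          - \<kappa> * idem_defect_lin (\<lambda>s. b s mod q) (\<lambda>s. b s div q) i j"
        using core_cond_lift[OF parts(1), of \<kappa> \<alpha> "\<lambda>s. b s div q"] c by simp
      thus "z \<in> X.lin_sols" using parts k a by (simp add: z split_def X.lin_sols_def)
    qed
  qed
  thus ?thesis by (simp add: bij_betw_same_card)
qed

end

lemma g_comp_beta_gt_2:
  assumes b3: "\<beta> > 2"
  shows "int (g comp p) =
             (int n - int k - 1) * (int n - 2) * int p ^ (2*n - k - 5)
             + ((int n - int k - 1) * (int k - 1) + 1 + (int n - int k - 2) * (int n - int k - 3))
                 * int p ^ (n - 3) * (int p - 1)
             + (int n - int k - 2) * int p ^ (n - 3) * (int p - 1)^2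
             + (int n - int k - 2) * int p ^ (n - 2) * (int p - 1)
             + (int n - int k - 2) * (int n - int k - 3) * int p ^ (n - 3) * (int p - 1) * (int p - 2)"
proof -
  interpret X: defect_count p R S by (rule defect_count_inst)
  have "int (g comp p) = int (card X.lin_sols) * P ^ (n - 3)"
    using g_eq_card_params card_params card_core_eq_lin_sols[OF b3] by simp
  moreover have "card R = n - 3" "card S = n - k - 2" "card (R - S) = k - 1"
    by (rule card_R, rule card_S, rule card_R_minus_S)
  moreover have "2 * n - k - 5 = (n - k - 2) + (n - 3)" "n - 2 = Suc (n - 3)" using kn n3 by arith+
  hence "P ^ (2 * n - k - 5) = P ^ (n - k - 2) * P ^ (n - 3)" "P ^ (n - 2) = P * P ^ (n - 3)"
    by (simp_all only: power_add power_Suc)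
  ultimately show ?thesis
    using n3 k1 kn by (simp add: X.int_card_lin_sols of_nat_diff algebra_simps power2_eq_square)
qed

end

theorem lemma4p6:
  fixes n k \<beta> p :: nat
  assumes "n \<ge> 3" and "1 \<le> k" and "k \<le> n - 2" and "\<beta> > 1" and "prime p"
  defines "\<alpha> \<equiv> [3] @ replicate (k - 1) 1 @ [\<beta>] @ replicate (n - k - 2) 1"
  shows "(\<beta> = 2 \<longrightarrow>
           int (g \<alpha> p) =
             (int n - 1) * int p ^ (2*n - k - 5)
             + (int n - int k - 1) * (int n - 2) * int p ^ (n - 3) * (int p - 1)
             - (int n - int k - 1) * int p ^ (n - 3)
             + ((int n - int k - 2) + int ((n - k - 2) choose 2))
                 * int p ^ (n - 3) * (int p - 2) * (int p - 3))
       \<and> (\<beta> > 2 \<longrightarrow>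
           int (g \<alpha> p) =
             (int n - int k - 1) * (int n - 2) * int p ^ (2*n - k - 5)
             + ((int n - int k - 1) * (int k - 1) + 1 + (int n - int k - 2) * (int n - int k - 3))
                 * int p ^ (n - 3) * (int p - 1)
             + (int n - int k - 2) * int p ^ (n - 3) * (int p - 1)^2
             + (int n - int k - 2) * int p ^ (n - 2) * (int p - 1)
             + (int n - int k - 2) * (int n - int k - 3) * int p ^ (n - 3) * (int p - 1) * (int p - 2))"
proof -
  interpret three_beta_comp p n k \<beta> using assms by (unfold_locales) auto
  have "\<alpha> = comp" by (simp add: \<alpha>_def comp_def)
  thus ?thesis using g_comp_beta_eq_2 g_comp_beta_gt_2 by simp
qed

end
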